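(* Let $G\in\mathrm{C}^1(\mathbb{R})$ be coercive, $V\in\mathrm{Lip}(\mathbb{R})$ $1$-periodic, $\theta\in\mathbb{R}$, and let $\overline{H}$, $f_\theta$, $I_\theta$, $B_\theta$, $b(\theta)$ be as in the context (with $I_\theta(1)\neq0$). (a) If $I_\theta(1)>0$, then for all sufficiently small $h>0$ there is $\theta^*\in(\theta,\theta+hb(\theta))$ with $\overline{H}(\theta^* )=\overline{H}(\theta)+h/2>\overline{H}(\theta)$. (b) If $I_\theta(1)<0$, then for all sufficiently small $h>0$ there is $\theta^*\in(\theta-hb(\theta),\theta)$ with $\overline{H}(\theta^* )=\overline{H}(\theta)+h/2>\overline{H}(\theta)$.
   Context: $G$ coercive means $G(p)\to\infty$ as $p\to\pm\infty$. For each $\theta\in\mathbb{R}$, $\overline{H}(\theta)\in\mathbb{R}$ and the $1$-periodic $f_\theta\in\mathrm{C}^1(\mathbb{R})$ are the unique number and function with $\int_0^1 f_\theta=\theta$ and $f_\theta'(x)+G(f_\theta(x))+V(x)=\overline{H}(\theta)$ for all $x$. Set $I_\theta(x)=\int_0^x G'(f_\theta(y))\,dy$ and $B_\theta(x)=\int_0^x e^{I_\theta(y)}dy$. When $I_\theta(1)\ne0$, let $g_\theta(x)=s\big(B_\theta(x)+\frac{B_\theta(1)}{e^{I_\theta(1)}-1}\big)e^{-I_\theta(x)}$ where $s=1$ if $I_\theta(1)>0$ and $s=-1$ if $I_\theta(1)<0$; this is the $1$-periodic positive $\mathrm{C}^1$ solution of $g'+G'(f_\theta)g=s$. Define $b(\theta)=\int_0^1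 g_\theta(x)\,dx>0$. *)

theory Defs
  imports "HOL-Analysis.Analysis"
begin

definition cell_sol ::
  "(real \<Rightarrow> real) \<Rightarrow> (real \<Rightarrow> real) \<Rightarrow> real \<Rightarrow> real \<Rightarrow> (real \<Rightarrow> real) \<Rightarrow> bool" where
  "cell_sol G V \<theta> c f \<longleftrightarrow>
     (\<forall>x. f (x + 1) = f x) \<and>
     (\<exists>f'. continuous_on UNIV f' \<and> (\<forall>x. (f has_real_derivative f' x) (at x)) \<and>
           (\<forall>x. f' x + G (f x) + V x = c)) \<and>
     integral {0..1} f = \<theta>"

definition Hbar :: "(real \<Rightarrow> real) \<Rightarrow> (real \<Rightarrow> real) \<Rightarrow> real \<Rightarrow> real" where
  "Hbar G V \<theta> = (THE c. \<exists>f. cell_sol G V \<theta> c f)"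

definition fsol :: "(real \<Rightarrow> real) \<Rightarrow> (real \<Rightarrow> real) \<Rightarrow> real \<Rightarrow> real \<Rightarrow> real" where
  "fsol G V \<theta> = (THE f. cell_sol G V \<theta> (Hbar G V \<theta>) f)"

definition Ifun :: "(real \<Rightarrow> real) \<Rightarrow> (real \<Rightarrow> real) \<Rightarrow> (real \<Rightarrow> real) \<Rightarrow> real \<Rightarrow> real \<Rightarrow> real" where
  "Ifun G G' V \<theta> x = integral {0..x} (\<lambda>y. G' (fsol G V \<theta> y))"

definition Bfun :: "(real \<Rightarrow> real) \<Rightarrow> (real \<Rightarrow> real) \<Rightarrow> (real \<Rightarrow> real) \<Rightarrow> real \<Rightarrow> real \<Rightarrow> real" where
  "Bfun G G' V \<theta> x = integral {0..x} (\<lambda>y. exp (Ifun G G' V \<theta> y))"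

definition gfun :: "(real \<Rightarrow> real) \<Rightarrow> (real \<Rightarrow> real) \<Rightarrow> (real \<Rightarrow> real) \<Rightarrow> real \<Rightarrow> real \<Rightarrow> real" where
  "gfun G G' V \<theta> x =
     (let s = (if Ifun G G' V \<theta> 1 > 0 then 1 else -1) in
      s * (Bfun G G' V \<theta> x + Bfun G G' V \<theta> 1 / (exp (Ifun G G' V \<theta> 1) - 1))
        * exp (- Ifun G G' V \<theta> x))"

definition bfun :: "(real \<Rightarrow> real) \<Rightarrow> (real \<Rightarrow> real) \<Rightarrow> (real \<Rightarrow> real) \<Rightarrow> real \<Rightarrow> real" where
  "bfun G G' V \<theta> = integral {0..1} (gfun G G' V \<theta>)"

end

theory Submission
  imports Defs
begin

(* The cell equation f' = c - G(f) - V is solved on [0,1] by sub- and supersolutions, the solution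
   being obtained by monotone iteration of an integral operator. Two periodic solutions are either
   equal or strictly ordered, so a periodic solution is determined by its mean; the means fill the
   whole line, being unbounded in both directions (coercivity), closed under monotone limits, and
   gap-free, because between two periodic solutions a third one can be trapped. This makes Hbar
   and f_theta well defined.
   For the lemma, g solves the linearised equation g' + G'(f) g = s, so for small h the function
   psi = f + s h g satisfies psi' >= c + h/2 - G(psi) - V + h/4. Hence psi is a strict
   supersolution and f a subsolution for the constant c + h/2, and the periodic solution trapped
   between them has Hbar = Hbar(theta) + h/2 and mean strictly between theta and theta + s h b. *)

lemma deriv_nonneg_imp_mono_on_Icc:
  fixes f f' :: "real \<Rightarrow> real"
  assumes deriv: "\<And>x. x \<in> {a..b} \<Longrightarrow> (f has_real_derivative f' x) (at x within {a..b})"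
    and nonneg: "\<And>x. x \<in> {a..b} \<Longrightarrow> f' x \<ge> 0" and "a \<le> x" "x \<le> y" "y \<le> b"
  shows "f x \<le> f y"
proof (rule DERIV_nonneg_imp_increasing_open[OF \<open>x \<le> y\<close>])
  fix t assume t: "x < t" "t < y"
  have "at t within {a..b} = at t"
    by (rule at_within_interior) (use t assms in auto)
  then show "\<exists>z. DERIV f t :> z \<and> z \<ge> 0"
    using deriv[of t] nonneg[of t] t assms by auto
next
  have "continuous_on {a..b} f" by (rule DERIV_continuous_on[OF deriv])
  then show "continuous_on {x..y} f" by (rule continuous_on_subset) (use assms in auto)
qed

lemma continuous_on_Icc_bound:
  fixes f :: "real \<Rightarrow> real"
  assumes "continuous_on {a..b} f"
  obtains M where "\<And>x. x \<in> {a..b} \<Longrightarrow> \<bar>f x\<bar> \<le> M"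
  using continuous_on_compact_bound[OF compact_Icc assms] by (metis real_norm_def)

lemma integral_pos_if_continuous_pos:
  fixes f :: "real \<Rightarrow> real"
  assumes cont: "continuous_on {0..1} f" and pos: "\<And>x. x \<in> {0..1} \<Longrightarrow> f x > 0"
  shows "integral {0..1} f > 0"
proof -
  obtain m where m: "m \<in> {0..1}" "\<And>y. y \<in> {0..1} \<Longrightarrow> f m \<le> f y"
    using continuous_attains_inf[of "{0..1::real}" f] cont by auto
  have "integral {0..1::real} (\<lambda>_. f m) \<le> integral {0..1} f"
    by (rule integral_le) (use m integrable_continuous_interval[OF cont] in auto)
  then show ?thesis using pos[OF m(1)] by simp
qed

lemma incseq_tendsto_if_subseq_tendsto:
  fixes X :: "nat \<Rightarrow> real"
  assumes X: "incseq X" and r: "strict_mono r" and lim: "(\<lambda>n. X (r n)) \<longlonglongrightarrow> l"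
  shows "X \<longlonglongrightarrow> l"
proof -
  have "incseq (\<lambda>n. X (r n))" using X r by (simp add: incseq_def strict_mono_leD)
  then have "X n \<le> l" for n
    using incseq_le[OF _ lim, of n] incseqD[OF X seq_suble[OF r, of n]] by auto
  then have "X \<longlonglongrightarrow> (SUP n. X n)" by (intro LIMSEQ_incseq_SUP bdd_aboveI2 X)
  moreover from LIMSEQ_subseq_LIMSEQ[OF this r] have "(SUP n. X n) = l"
    using LIMSEQ_unique lim by (auto simp: o_def)
  ultimately show ?thesis by simp
qed

lemma incseq_in_set_tendsto_Sup:
  fixes S :: "real set"
  assumes S: "S \<noteq> {}" "bdd_above S" and not_max: "Sup S \<notin> S"
  obtains m where "\<And>n. m n \<in> S" "incseq m" "m \<longlonglongrightarrow> Sup S"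
proof -
  have "\<exists>y\<in>S. Sup S - 1 / Suc n < y" for n by (rule less_cSupD[OF S(1)]) simp
  then have "\<forall>n. \<exists>y. y \<in> S \<and> Sup S - 1 / Suc n < y" by blast
  then obtain y where y: "\<And>n. y n \<in> S" "\<And>n. Sup S - 1 / Suc n < y n"
    using choice[of "\<lambda>n y. y \<in> S \<and> Sup S - 1 / Suc n < y"] by blast
  have y_less: "y n < Sup S" for n
  proof -
    have "y n \<le> Sup S" by (rule cSup_upper[OF y(1) S(2)])
    moreover have "y n \<noteq> Sup S" using y(1)[of n] not_max by auto
    ultimately show ?thesis by simp
  qed
  have "(\<lambda>n. Sup S - 1 / Suc n) \<longlonglongrightarrow> Sup S - 0"
    by (intro tendsto_intros LIMSEQ_inverse_real_of_nat[unfolded inverse_eq_divide])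
  then have "(\<lambda>n. Sup S - 1 / Suc n) \<longlonglongrightarrow> Sup S" by simp
  then have y_lim: "y \<longlonglongrightarrow> Sup S"
  proof (rule tendsto_sandwich[OF _ _ _ tendsto_const, rotated 2])
    show "\<forall>\<^sub>F n in sequentially. Sup S - 1 / Suc n \<le> y n" using y(2) by (simp add: less_imp_le)
    show "\<forall>\<^sub>F n in sequentially. y n \<le> Sup S" using y_less by (simp add: less_imp_le)
  qed
  obtain r where r: "strict_mono r" "monoseq (\<lambda>n. y (r n))" using seq_monosub by blast
  have lim_r: "(\<lambda>n. y (r n)) \<longlonglongrightarrow> Sup S" using LIMSEQ_subseq_LIMSEQ[OF y_lim r(1)] by (simp add: o_def)
  have "\<not> decseq (\<lambda>n. y (r n))"
    using decseq_ge[OF _ lim_r, of 0] y_less[of "r 0"] by auto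
  then have "incseq (\<lambda>n. y (r n))" using r(2) unfolding monoseq_iff by blast
  then show ?thesis using that[of "\<lambda>n. y (r n)"] y(1) lim_r by blast
qed

lemma exponential_push_down:
  fixes f u :: "real \<Rightarrow> real"
  assumes "continuous_on {0..1} f" "continuous_on {0..1} u" and less: "\<And>x. x \<in> {0..1} \<Longrightarrow> f x < u x"
    and "u 0 < u 1" "L > 0"
  obtains c where "c > 0" "\<And>x. x \<in> {0..1} \<Longrightarrow> f x < u x - c * (exp (L * x) - 1)"
    "u 0 \<le> u 1 - c * (exp L - 1)"
proof -
  have "continuous_on {0..1} (\<lambda>x. u x - f x)" using assms(1,2) by (intro continuous_intros)
  then obtain xm where xm: "xm \<in> {0..1}" "\<forall>y\<in>{0..1}. u xm - f xm \<le> u y - f y"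
    using continuous_attains_inf[of "{0..1::real}" "\<lambda>x. u x - f x"] by auto
  define \<delta> where "\<delta> = min (u xm - f xm) (u 1 - u 0)"
  define c where "c = \<delta> / (2 * (exp L - 1))"
  have "\<delta> > 0" "exp L - 1 > 0" using less[OF xm(1)] assms(4,5) unfolding \<delta>_def by auto
  then have c: "c > 0" "c * (exp L - 1) < \<delta>" unfolding c_def by (auto simp: field_simps)
  have "f x < u x - c * (exp (L * x) - 1)" if "x \<in> {0..1}" for x
  proof -
    have "c * (exp (L * x) - 1) \<le> c * (exp L - 1)" using that c assms(5) by (intro mult_left_mono) auto
    moreover have "u xm - f xm \<le> u x - f x" using xm(2) that by blast
    ultimately show ?thesis using c unfolding \<delta>_def by linarith
  qed
  moreover have "u 0 \<le> u 1 - c * (exp L - 1)" using c unfolding \<delta>_def by simp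
  ultimately show ?thesis using that c(1) by blast
qed

lemma continuous_nonzero_imp_const_sign:
  fixes f :: "real \<Rightarrow> real"
  assumes cont: "continuous_on {0..1} f" and nonzero: "\<And>x. x \<in> {0..1} \<Longrightarrow> f x \<noteq> 0"
  shows "(\<forall>x\<in>{0..1}. f x > 0) \<or> (\<forall>x\<in>{0..1}. f x < 0)"
proof (rule ccontr)
  assume "\<not> ?thesis"
  then obtain p q where pq: "p \<in> {0..1}" "q \<in> {0..1}" "f p < 0" "f q > 0"
    using nonzero by (metis linorder_neqE_linordered_idom)
  have "connected (f ` {0..1})"
    by (rule connected_continuous_image[OF cont]) simp
  moreover have "f p \<in> f ` {0..1}" "f q \<in> f ` {0..1}" using pq by auto
  ultimately have "0 \<in> f ` {0..1}"
    using pq by (intro connectedD_interval[of "f ` {0..1}" "f p" "f q" 0]) auto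
  then show False using nonzero by auto
qed

lemma exists_first_zero:
  fixes w :: "real \<Rightarrow> real"
  assumes cont: "continuous_on {a..b} w" and "w a > 0" "w b \<le> 0" "a \<le> b"
  obtains z where "a < z" "z \<le> b" "w z = 0" "\<And>t. a \<le> t \<Longrightarrow> t < z \<Longrightarrow> w t > 0"
proof -
  define S where "S = {a..b} \<inter> w -` {..0}"
  have S: "S \<noteq> {}" "bdd_below S" "closed S"
    using assms continuous_closed_preimage[OF cont] unfolding S_def by (auto intro: bdd_belowI[of _ a])
  define z where "z = Inf S"
  have "z \<in> S" unfolding z_def by (rule closed_contains_Inf[OF S(1,2,3)])
  then have z: "a < z" "z \<le> b" "w z \<le> 0" using \<open>w a > 0\<close> unfolding S_def by (cases "z = a", auto)
  have pos: "w t > 0" if "a \<le> t" "t < z" for t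
  proof (rule ccontr)
    assume "\<not> w t > 0"
    then have "t \<in> S" using that z unfolding S_def by auto
    then show False using cInf_lower[OF _ S(2)] that unfolding z_def by fastforce
  qed
  have "w z = 0"
  proof (rule ccontr)
    assume "w z \<noteq> 0"
    then obtain t where "a \<le> t" "t \<le> z" "w t = 0"
      using IVT2'[of w z 0 a] z \<open>w a > 0\<close> continuous_on_subset[OF cont, of "{a..z}"] by force
    then show False using pos[of t] \<open>w z \<noteq> 0\<close> by (cases "t = z") auto
  qed
  then show ?thesis using that z pos by blast
qed

text \<open>After an upward crossing of zero the function would have to come back down through zero.\<close>

lemma periodic_nonzero_if_deriv_pos_at_zeros:
  fixes w w' :: "real \<Rightarrow> real"
  assumes deriv: "\<And>x. x \<in> {0..1} \<Longrightarrow> (w has_real_derivative w' x) (at x within {0..1})"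
    and periodic: "w 0 = w 1"
    and up: "\<And>x. x \<in> {0..1} \<Longrightarrow> w x = 0 \<Longrightarrow> w' x > 0"
    and x: "x \<in> {0..1}"
  shows "w x \<noteq> 0"
proof
  assume "w x = 0"
  have cont: "continuous_on {0..1} w" by (rule DERIV_continuous_on[OF deriv])
  have no_positive_left: False
    if zero: "z \<in> {0..1}" "w z = 0" "a < z" "0 \<le> a" "\<And>t. a \<le> t \<Longrightarrow> t < z \<Longrightarrow> w t > 0" for z a
  proof -
    obtain e where e: "e > 0" "\<And>h. h > 0 \<Longrightarrow> z - h \<in> {0..1} \<Longrightarrow> h < e \<Longrightarrow> w (z - h) < w z"
      using has_real_derivative_pos_inc_left[OF deriv up] zero(1,2) by metis
    define h where "h = min (e / 2) (z - a)"
    have "h > 0" "h < e" "z - h \<in> {0..1}" "a \<le> z - h" "z - h < z"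
      using e zero unfolding h_def by (auto simp: min_def)
    then show False using e(2)[of h] zero(2) zero(5)[of "z - h"] by fastforce
  qed
  obtain z where z: "z \<in> {0..<1}" "w z = 0"
    using \<open>w x = 0\<close> x periodic by (cases "x = 1") (auto intro: that[of 0] that[of x])
  then obtain e where e: "e > 0" "\<And>h. h > 0 \<Longrightarrow> z + h \<in> {0..1} \<Longrightarrow> h < e \<Longrightarrow> w z < w (z + h)"
    using has_real_derivative_pos_inc_right[OF deriv up, of z] by (metis atLeastLessThan_iff
        atLeastAtMost_iff less_imp_le)
  define a where "a = z + min (e / 2) (1 - z)"
  have a: "z < a" "a \<le> 1" "w a > 0" using e z unfolding a_def by (auto simp: min_def)
  show False
  proof (cases "w 1 \<le> 0")
    case True
    obtain z' where "a < z'" "z' \<le> 1" "w z' = 0" "\<And>t. a \<le> t \<Longrightarrow> t < z' \<Longrightarrow> w t > 0"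
      using exists_first_zero[OF continuous_on_subset[OF cont] a(3) True a(2)] a z by auto
    then show False using no_positive_left[of z' a] a z by auto
  next
    case False
    then have "w 0 > 0" using periodic by auto
    then have "z > 0" using z by (cases "z = 0") auto
    obtain z' where "0 < z'" "z' \<le> z" "w z' = 0" "\<And>t. 0 \<le> t \<Longrightarrow> t < z' \<Longrightarrow> w t > 0"
      using exists_first_zero[OF continuous_on_subset[OF cont] \<open>w 0 > 0\<close> eq_refl[OF z(2)]] z by auto
    then show False using no_positive_left[of z' 0] z by auto
  qed
qed

lemma gronwall_identically_zero:
  fixes w w' :: "real \<Rightarrow> real"
  assumes deriv: "\<And>x. x \<in> {0..1} \<Longrightarrow> (w has_real_derivative w' x) (at x within {0..1})"
    and bound: "\<And>x. x \<in> {0..1} \<Longrightarrow> \<bar>w' x\<bar> \<le> L * \<bar>w x\<bar>"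
    and zero: "x0 \<in> {0..1}" "w x0 = 0" and x: "x \<in> {0..1}"
  shows "w x = 0"
proof -
  have weighted_deriv: "((\<lambda>t. exp (c * t) * (w t)\<^sup>2) has_real_derivative
      exp (c * t) * (c * (w t)\<^sup>2 + 2 * w t * w' t)) (at t within {0..1})" if "t \<in> {0..1}" for c t
    by (rule derivative_eq_intros deriv[OF that] refl | simp)+ (simp add: algebra_simps power2_eq_square)
  have growth: "\<bar>2 * w t * w' t\<bar> \<le> 2 * L * (w t)\<^sup>2" if "t \<in> {0..1}" for t
    using mult_left_mono[OF bound[OF that], of "2 * \<bar>w t\<bar>"]
    by (simp add: abs_mult power2_eq_square mult_ac)
  have "exp (2 * L * x) * (w x)\<^sup>2 \<le> 0 \<or> exp (- 2 * L * x) * (w x)\<^sup>2 \<le> 0"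
  proof (cases "x \<le> x0")
    case True
    have "exp (2 * L * x) * (w x)\<^sup>2 \<le> exp (2 * L * x0) * (w x0)\<^sup>2"
    proof (rule deriv_nonneg_imp_mono_on_Icc[OF weighted_deriv])
      show "0 \<le> exp (2 * L * t) * (2 * L * (w t)\<^sup>2 + 2 * w t * w' t)" if "t \<in> {0..1}" for t
        using growth[OF that] by (intro mult_nonneg_nonneg) (auto simp: abs_le_iff)
    qed (use x zero True in auto)
    then show ?thesis using zero by simp
  next
    case False
    have "- (exp (- 2 * L * x0) * (w x0)\<^sup>2) \<le> - (exp (- 2 * L * x) * (w x)\<^sup>2)"
    proof (rule deriv_nonneg_imp_mono_on_Icc[OF DERIV_minus[OF weighted_deriv]])
      show "0 \<le> - (exp (- 2 * L * t) * (- 2 * L * (w t)\<^sup>2 + 2 * w t * w' t))" if "t \<in> {0..1}" for t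
        using growth[OF that] by (auto simp: abs_le_iff intro!: mult_nonneg_nonpos)
    qed (use x zero False in auto)
    then show ?thesis using zero by simp
  qed
  then show ?thesis by (auto simp: mult_le_0_iff)
qed

lemma gronwall_pos_propagates:
  fixes d d' :: "real \<Rightarrow> real"
  assumes deriv: "\<And>x. x \<in> {0..1} \<Longrightarrow> (d has_real_derivative d' x) (at x within {0..1})"
    and lower: "\<And>x. x \<in> {0..1} \<Longrightarrow> d' x \<ge> - L * d x"
    and "d 0 > 0" and x: "x \<in> {0..1}"
  shows "d x > 0"
proof -
  have "exp (L * 0) * d 0 \<le> exp (L * x) * d x"
  proof (rule deriv_nonneg_imp_mono_on_Icc[where f="\<lambda>t. exp (L * t) * d t" and a=0 and b=1])
    show "((\<lambda>t. exp (L * t) * d t) has_real_derivative exp (L * t) * (d' t + L * d t))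
        (at t within {0..1})" if "t \<in> {0..1}" for t
      by (rule derivative_eq_intros deriv[OF that] refl | simp add: algebra_simps)+
    show "0 \<le> exp (L * t) * (d' t + L * d t)" if "t \<in> {0..1}" for t
      using lower[OF that] by simp
  qed (use x in auto)
  then have "exp (L * x) * d x > 0" using \<open>d 0 > 0\<close> by simp
  then show ?thesis by (simp add: zero_less_mult_iff)
qed

lemma has_real_derivative_reflect01:
  fixes u :: "real \<Rightarrow> real"
  assumes "\<And>x. x \<in> {0..1} \<Longrightarrow> (u has_real_derivative u' x) (at x within {0..1})" "x \<in> {0..1}"
  shows "((\<lambda>x. u (1 - x)) has_real_derivative - u' (1 - x)) (at x within {0..1})"
proof -
  have "(\<lambda>x. 1 - x) ` {0..1} = {0..1::real}"
    by (auto simp: image_iff intro!: bexI[of _ "1 - x" for x])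
  then have "(u \<circ> (\<lambda>x. 1 - x) has_real_derivative u' (1 - x) * -1) (at x within {0..1})"
    using assms by (intro DERIV_image_chain) (auto intro!: derivative_eq_intros)
  then show ?thesis by (simp add: o_def)
qed

lemma integral_reflect01:
  fixes v :: "real \<Rightarrow> real"
  shows "integral {0..1} (\<lambda>x. v (1 - x)) = integral {0..1} v"
proof -
  have "integral {0..1} (\<lambda>x. v (1 - x)) = integral {-0..-(-1)} (\<lambda>x. (\<lambda>y. v (1 + y)) (-x))"
    by simp
  also have "\<dots> = integral {-1..0} (\<lambda>y. v (1 + y))"
    by (rule Henstock_Kurzweil_Integration.integral_reflect_real)
  also have "\<dots> = integral {-1..0} (v \<circ> (+) 1)" by (simp add: o_def)
  also have "\<dots> = integral {0..1} v" by (simp add: integral_shift_Icc_real)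
  finally show ?thesis .
qed

lemma bounded_convergence_Icc:
  fixes f :: "nat \<Rightarrow> real \<Rightarrow> real"
  assumes cont: "\<And>n. continuous_on {0..1} (f n)"
    and bound: "\<And>n t. t \<in> {0..1} \<Longrightarrow> \<bar>f n t\<bar> \<le> K"
    and lim: "\<And>t. t \<in> {0..1} \<Longrightarrow> (\<lambda>n. f n t) \<longlonglongrightarrow> g t"
    and x: "x \<in> {0..1}"
  shows "g integrable_on {0..x}" "(\<lambda>n. integral {0..x} (f n)) \<longlonglongrightarrow> integral {0..x} g"
proof -
  have sub: "{0..x} \<subseteq> {0..1}" using x by auto
  have "f n integrable_on {0..x}" for n
    by (rule integrable_continuous_interval, rule continuous_on_subset[OF cont sub])
  moreover have "(\<lambda>_. K) integrable_on {0..x}" by (rule integrable_const_ivl)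
  moreover have "norm (f n t) \<le> K" if "t \<in> {0..x}" for n t using bound[of t n] sub that by auto
  moreover have "(\<lambda>n. f n t) \<longlonglongrightarrow> g t" if "t \<in> {0..x}" for t using lim[of t] sub that by auto
  ultimately show "g integrable_on {0..x}" "(\<lambda>n. integral {0..x} (f n)) \<longlonglongrightarrow> integral {0..x} g"
    using dominated_convergence[of f "{0..x}" "\<lambda>_. K" g] by blast+
qed

lemma continuous_on_Icc_Times_bound:
  fixes F :: "real \<Rightarrow> real \<Rightarrow> real"
  assumes "continuous_on ({a..b} \<times> {A..B}) (\<lambda>z. F (fst z) (snd z))"
  obtains K where "\<And>t p. t \<in> {a..b} \<Longrightarrow> p \<in> {A..B} \<Longrightarrow> \<bar>F t p\<bar> \<le> K"
  using continuous_on_compact_bound[OF compact_Times[OF compact_Icc compact_Icc] assms]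
  by (metis SigmaI fst_conv real_norm_def snd_conv)

lemma integral_less_if_continuous_less:
  fixes f g :: "real \<Rightarrow> real"
  assumes "continuous_on {0..1} f" "continuous_on {0..1} g" "\<And>x. x \<in> {0..1} \<Longrightarrow> f x < g x"
  shows "integral {0..1} f < integral {0..1} g"
proof -
  have "integral {0..1} (\<lambda>x. g x - f x) > 0"
    using assms by (intro integral_pos_if_continuous_pos continuous_intros) auto
  moreover have "integral {0..1} (\<lambda>x. g x - f x) = integral {0..1} g - integral {0..1} f"
    using assms by (intro integral_diff integrable_continuous_interval)
  ultimately show ?thesis by simp
qed

lemma mean_reflection:
  fixes u :: "real \<Rightarrow> real"
  assumes "continuous_on {0..1} u"
  shows "integral {0..1} (\<lambda>x. - u (1 - x)) = - integral {0..1} u"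
proof -
  have "continuous_on {0..1} (\<lambda>x. u (1 - x))"
    by (rule continuous_on_compose2[OF assms]) (auto intro!: continuous_intros)
  then have "(\<lambda>x. u (1 - x)) integrable_on {0..1}" by (rule integrable_continuous_interval)
  then show ?thesis using integral_reflect01[of u] by (simp add: integral_neg)
qed

lemma sign_integral_less:
  fixes u v :: "real \<Rightarrow> real"
  assumes "continuous_on {0..1} u" "continuous_on {0..1} v" "\<And>x. x \<in> {0..1} \<Longrightarrow> \<sigma> * u x < \<sigma> * v x"
  shows "\<sigma> * integral {0..1} u < \<sigma> * integral {0..1} v"
  using integral_less_if_continuous_less[of "\<lambda>x. \<sigma> * u x" "\<lambda>x. \<sigma> * v x"] assms
  by (simp add: continuous_intros)

lemma linear_periodic_solution:
  fixes a :: "real \<Rightarrow> real"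
  assumes a: "continuous_on {0..1} a"
    and I: "\<And>x. I x = integral {0..x} a" and B: "\<And>x. B x = integral {0..x} (\<lambda>y. exp (I y))"
    and I1: "I 1 \<noteq> 0" and s: "s = (if I 1 > 0 then 1 else -1)"
    and g: "\<And>x. g x = s * (B x + B 1 / (exp (I 1) - 1)) * exp (- I x)"
  shows "\<And>x. x \<in> {0..1} \<Longrightarrow> (g has_real_derivative s - a x * g x) (at x within {0..1})"
    and "g 0 = g 1" and "\<And>x. x \<in> {0..1} \<Longrightarrow> g x > 0"
proof -
  define K where "K = B 1 / (exp (I 1) - 1)"
  have I_deriv: "(I has_real_derivative a x) (at x within {0..1})" if "x \<in> {0..1}" for x
    unfolding I[abs_def] by (rule integral_has_real_derivative[OF a that])
  have exp_I_cont: "continuous_on {0..1} (\<lambda>y. exp (I y))"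
    by (intro continuous_intros DERIV_continuous_on[OF I_deriv])
  have B_deriv: "(B has_real_derivative exp (I x)) (at x within {0..1})" if "x \<in> {0..1}" for x
    unfolding B[abs_def] by (rule integral_has_real_derivative[OF exp_I_cont that])
  show "(g has_real_derivative s - a x * g x) (at x within {0..1})" if "x \<in> {0..1}" for x
  proof -
    have "((\<lambda>x. s * (B x + K) * exp (- I x)) has_real_derivative
        s * exp (I x) * exp (- I x) - a x * (s * (B x + K) * exp (- I x))) (at x within {0..1})"
      by (rule derivative_eq_intros B_deriv I_deriv that refl | simp add: algebra_simps)+
    moreover have "s * exp (I x) * exp (- I x) = s" by (simp only: mult.assoc exp_minus_inverse mult_1_right)
    ultimately show ?thesis unfolding g K_def[symmetric] by simp
  qed
  have I0: "I 0 = 0" and B0: "B 0 = 0" using I B by auto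
  have e1: "exp (I 1) \<noteq> 1" using I1 by simp
  have B1_K: "B 1 + K = K * exp (I 1)" unfolding K_def using e1 by (simp add: field_simps)
  show "g 0 = g 1" unfolding g K_def[symmetric] B1_K by (simp add: I0 B0 exp_minus_inverse)
  have B_mono: "B x \<le> B y" if "0 \<le> x" "x \<le> y" "y \<le> 1" for x y
    by (rule deriv_nonneg_imp_mono_on_Icc[OF B_deriv]) (use that in auto)
  have "B 1 > 0"
    using integral_pos_if_continuous_pos[OF exp_I_cont] B[of 1] by simp
  show "g x > 0" if x: "x \<in> {0..1}" for x
  proof (cases "I 1 > 0")
    case True
    then have "K > 0" using \<open>B 1 > 0\<close> unfolding K_def by simp
    moreover have "B x \<ge> 0" using B_mono[of 0 x] x B0 by auto
    ultimately show ?thesis unfolding g K_def[symmetric] s using True by simp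
  next
    case False
    then have "I 1 < 0" using I1 by simp
    then have "K < 0" using \<open>B 1 > 0\<close> unfolding K_def by (simp add: divide_pos_neg)
    then have "B 1 + K < 0" unfolding B1_K by (simp add: mult_neg_pos)
    moreover have "B x \<le> B 1" using B_mono[of x 1] x by auto
    ultimately show ?thesis unfolding g K_def[symmetric] s using False by (simp add: mult_neg_pos)
  qed
qed

section \<open>Periodic extension\<close>

lemma periodic_add_of_int:
  assumes periodic: "\<And>x. f (x + 1) = f x"
  shows "f (x + of_int n) = f (x :: real)"
proof (induction n arbitrary: x rule: int_induct[where k=0])
  case (step1 i)
  then show ?case using periodic[of "x + of_int i"] by (simp add: add.assoc)
next
  case (step2 i)
  then show ?case using periodic[of "x + of_int (i - 1)"] by (simp add: algebra_simps)
qed simp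

lemma periodic_frac:
  assumes "\<And>x. f (x + 1) = f x"
  shows "f (frac x) = f (x :: real)"
  using periodic_add_of_int[of f, OF assms, of "frac x" "\<lfloor>x\<rfloor>"] by (simp add: frac_def)

definition periodic_ext :: "(real \<Rightarrow> real) \<Rightarrow> real \<Rightarrow> real" where
  "periodic_ext u x = u (frac x)"

lemma periodic_ext_periodic: "periodic_ext u (x + 1) = periodic_ext u x"
  by (simp add: periodic_ext_def frac_1_eq)

lemma periodic_ext_eq_shift:
  assumes "u 0 = u 1" "y \<in> {of_int m..of_int m + 1}"
  shows "periodic_ext u y = u (y - of_int m)"
proof (cases "y = of_int m + 1")
  case True
  then show ?thesis using assms(1) by (simp add: periodic_ext_def)
next
  case False
  then have "frac y = y - of_int m" using assms(2) by (auto simp: frac_unique_iff)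
  then show ?thesis by (simp add: periodic_ext_def)
qed

lemma has_real_derivative_within_Un:
  assumes "(f has_real_derivative D) (at x within S)" "(f has_real_derivative D) (at x within T)"
  shows "(f has_real_derivative D) (at x within S \<union> T)"
  using assms unfolding has_field_derivative_iff by (rule Lim_Un)

lemma periodic_ext_has_derivative_within_period:
  assumes deriv: "\<And>t. t \<in> {0..1} \<Longrightarrow> (u has_real_derivative D t) (at t within {0..1})"
    and "u 0 = u 1" and y: "y \<in> {of_int m..of_int m + 1}"
  shows "(periodic_ext u has_real_derivative D (y - of_int m)) (at y within {of_int m..of_int m + 1})"
proof -
  have "(\<lambda>y. y - of_int m) ` {of_int m..of_int m + 1} = {0..1::real}"
    by (auto simp: image_iff intro!: bexI[of _ "t + of_int m" for t])
  then have "(u \<circ> (\<lambda>y. y - of_int m) has_real_derivative D (y - of_int m) * 1)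
      (at y within {of_int m..of_int m + 1})"
    using deriv[of "y - of_int m"] y by (intro DERIV_image_chain) (auto intro!: derivative_eq_intros)
  then have "((\<lambda>y. u (y - of_int m)) has_real_derivative D (y - of_int m))
      (at y within {of_int m..of_int m + 1})" by (simp add: o_def)
  then show ?thesis
    by (rule has_field_derivative_transform_within[where d=1])
      (use y periodic_ext_eq_shift[OF \<open>u 0 = u 1\<close>] in auto)
qed

lemma periodic_ext_has_derivative:
  assumes deriv: "\<And>t. t \<in> {0..1} \<Longrightarrow> (u has_real_derivative D t) (at t within {0..1})"
    and "u 0 = u 1" "D 0 = D 1"
  shows "(periodic_ext u has_real_derivative D (frac x)) (at x)"
proof (cases "x \<in> \<int>")
  case True
  then obtain n where n: "x = of_int n" by (auto elim: Ints_cases)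
  have "(periodic_ext u has_real_derivative D 0) (at x within {of_int n..of_int n + 1})"
    using periodic_ext_has_derivative_within_period[OF assms(1,2), of x n] n by simp
  moreover have "(periodic_ext u has_real_derivative D 0) (at x within {of_int (n - 1)..of_int (n - 1) + 1})"
    using periodic_ext_has_derivative_within_period[OF assms(1,2), of x "n - 1"] n assms(3) by simp
  moreover have "{of_int n..of_int n + 1} \<union> {of_int (n - 1)..of_int (n - 1) + 1} = {x - 1..x + 1}"
    using n by auto
  ultimately have "(periodic_ext u has_real_derivative D 0) (at x within {x - 1..x + 1})"
    using has_real_derivative_within_Un by metis
  then have "(periodic_ext u has_real_derivative D 0) (at x)" by (simp add: at_within_Icc_at)
  moreover have "frac x = 0" using True by simp
  ultimately show ?thesis by (simp only:)
next
  case False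
  have x: "x \<in> {of_int \<lfloor>x\<rfloor><..<of_int \<lfloor>x\<rfloor> + 1}"
    using False by (auto simp: frac_gt_0_iff[symmetric] frac_def simp del: frac_gt_0_iff)
  then have "(periodic_ext u has_real_derivative D (frac x)) (at x within {of_int \<lfloor>x\<rfloor>..of_int \<lfloor>x\<rfloor> + 1})"
    using periodic_ext_has_derivative_within_period[OF assms(1,2), of x "\<lfloor>x\<rfloor>"] by (simp add: frac_def)
  then show ?thesis using x by (simp add: at_within_Icc_at)
qed

section \<open>The cell equation on the unit interval\<close>

locale cell_ode =
  fixes G G' V :: "real \<Rightarrow> real"
  assumes G_deriv: "\<And>p. (G has_real_derivative G' p) (at p)"
    and G'_cont: "continuous_on UNIV G'"
    and V_cont: "continuous_on {0..1} V"
begin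

lemma continuous_on_G: "continuous_on S G"
  by (meson DERIV_isCont G_deriv continuous_at_imp_continuous_on)

lemma continuous_on_G_comp: "continuous_on S u \<Longrightarrow> continuous_on S (\<lambda>t. G (u t))"
  using continuous_on_compose[of S u G] continuous_on_G by (simp add: o_def)

lemma G_Lipschitz_on_Icc:
  obtains L where "L > 0" "\<And>x y. x \<in> {A..B} \<Longrightarrow> y \<in> {A..B} \<Longrightarrow> \<bar>G x - G y\<bar> \<le> L * \<bar>x - y\<bar>"
proof -
  obtain M where M: "\<And>p. p \<in> {A..B} \<Longrightarrow> \<bar>G' p\<bar> \<le> M"
    using continuous_on_Icc_bound[OF continuous_on_subset[OF G'_cont]] by blast
  have "norm (G x - G y) \<le> (\<bar>M\<bar> + 1) * norm (x - y)" if "x \<in> {A..B}" "y \<in> {A..B}" for x y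
  proof (rule field_differentiable_bound[OF convex_real_interval(5) _ _ that])
    show "(G has_field_derivative G' z) (at z within {A..B})" for z
      by (rule has_field_derivative_at_within[OF G_deriv])
    show "norm (G' z) \<le> \<bar>M\<bar> + 1" if "z \<in> {A..B}" for z
      using M[OF that] by simp
  qed
  then show ?thesis by (intro that[of "\<bar>M\<bar> + 1"]) simp_all
qed

lemma G_Lipschitz_between:
  fixes f1 f2 :: "real \<Rightarrow> real"
  assumes "continuous_on {0..1} f1" "continuous_on {0..1} f2"
  obtains L where "L > 0" "\<And>x p q. x \<in> {0..1} \<Longrightarrow> p \<in> {f1 x..f2 x} \<Longrightarrow> q \<in> {f1 x..f2 x} \<Longrightarrow>
    \<bar>G p - G q\<bar> \<le> L * \<bar>p - q\<bar>"
proof -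
  obtain M1 where M1: "\<And>x. x \<in> {0..1} \<Longrightarrow> \<bar>f1 x\<bar> \<le> M1" using continuous_on_Icc_bound[OF assms(1)] by blast
  obtain M2 where M2: "\<And>x. x \<in> {0..1} \<Longrightarrow> \<bar>f2 x\<bar> \<le> M2" using continuous_on_Icc_bound[OF assms(2)] by blast
  obtain L where "L > 0" and L: "\<And>p q. p \<in> {- (\<bar>M1\<bar> + \<bar>M2\<bar>)..\<bar>M1\<bar> + \<bar>M2\<bar>} \<Longrightarrow>
      q \<in> {- (\<bar>M1\<bar> + \<bar>M2\<bar>)..\<bar>M1\<bar> + \<bar>M2\<bar>} \<Longrightarrow> \<bar>G p - G q\<bar> \<le> L * \<bar>p - q\<bar>"
    using G_Lipschitz_on_Icc by blast
  have "\<bar>G p - G q\<bar> \<le> L * \<bar>p - q\<bar>" if "x \<in> {0..1}" "p \<in> {f1 x..f2 x}" "q \<in> {f1 x..f2 x}" for x p q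
  proof (rule L)
    show "p \<in> {- (\<bar>M1\<bar> + \<bar>M2\<bar>)..\<bar>M1\<bar> + \<bar>M2\<bar>}" "q \<in> {- (\<bar>M1\<bar> + \<bar>M2\<bar>)..\<bar>M1\<bar> + \<bar>M2\<bar>}"
      using M1[OF that(1)] M2[OF that(1)] that(2,3) by (simp_all add: abs_le_iff)
  qed
  then show ?thesis using that \<open>L > 0\<close> by blast
qed

definition solution :: "real \<Rightarrow> (real \<Rightarrow> real) \<Rightarrow> bool" where
  "solution k u \<longleftrightarrow>
     (\<forall>x\<in>{0..1}. (u has_real_derivative k - G (u x) - V x) (at x within {0..1}))"

definition periodic_solution :: "real \<Rightarrow> (real \<Rightarrow> real) \<Rightarrow> bool" where
  "periodic_solution k u \<longleftrightarrow> solution k u \<and> u 0 = u 1"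

definition subsolution :: "real \<Rightarrow> (real \<Rightarrow> real) \<Rightarrow> bool" where
  "subsolution k a \<longleftrightarrow> (\<exists>a'. \<forall>x\<in>{0..1}.
     (a has_real_derivative a' x) (at x within {0..1}) \<and> a' x \<le> k - G (a x) - V x)"

definition supersolution :: "real \<Rightarrow> (real \<Rightarrow> real) \<Rightarrow> bool" where
  "supersolution k a \<longleftrightarrow> (\<exists>a'. \<forall>x\<in>{0..1}.
     (a has_real_derivative a' x) (at x within {0..1}) \<and> a' x \<ge> k - G (a x) - V x)"

lemma solution_continuous: "solution k u \<Longrightarrow> continuous_on {0..1} u"
  unfolding solution_def by (rule DERIV_continuous_on) auto

lemma periodic_solution_continuous: "periodic_solution k u \<Longrightarrow> continuous_on {0..1} u"
  unfolding periodic_solution_def using solution_continuous by blast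

lemma subsolution_continuous: "subsolution k a \<Longrightarrow> continuous_on {0..1} a"
  unfolding subsolution_def by (metis DERIV_continuous_on)

lemma supersolution_continuous: "supersolution k a \<Longrightarrow> continuous_on {0..1} a"
  unfolding supersolution_def by (metis DERIV_continuous_on)

lemma solution_imp_subsolution: "solution k u \<Longrightarrow> k \<le> k' \<Longrightarrow> subsolution k' u"
  unfolding solution_def subsolution_def by (intro exI[of _ "\<lambda>x. k - G (u x) - V x"]) auto

lemma solution_imp_supersolution: "solution k u \<Longrightarrow> k' \<le> k \<Longrightarrow> supersolution k' u"
  unfolding solution_def supersolution_def by (intro exI[of _ "\<lambda>x. k - G (u x) - V x"]) auto

lemma solution_eq_imp_eq_const:
  assumes u: "solution k u" and v: "solution k' v" and eq: "\<And>x. x \<in> {0..1} \<Longrightarrow> u x = v x"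
  shows "k = k'"
proof -
  define m :: real where "m = 1 / 2"
  have m: "m \<in> {0..1}" unfolding m_def by simp
  have at: "at m within {0..1} = at m" by (rule at_within_interior) (simp add: m_def)
  have "(u has_real_derivative k - G (u m) - V m) (at m within {0..1})"
    using u m unfolding solution_def by blast
  then have du: "(u has_real_derivative k - G (u m) - V m) (at m)" using at by simp
  have "(v has_real_derivative k' - G (v m) - V m) (at m within {0..1})"
    using v m unfolding solution_def by blast
  then have "(u has_real_derivative k' - G (v m) - V m) (at m within {0..1})"
    by (rule has_field_derivative_transform_within[where d=1]) (use m eq in auto)
  then have dv: "(u has_real_derivative k' - G (v m) - V m) (at m)" using at by simp
  have "k - G (u m) - V m = k' - G (v m) - V m" by (rule DERIV_unique[OF du dv])
  then show ?thesis using eq[OF m] by simp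
qed

lemma continuous_on_V_comp:
  "continuous_on S u \<Longrightarrow> u ` S \<subseteq> {0..1} \<Longrightarrow> continuous_on S (\<lambda>t. V (u t))"
  by (rule continuous_on_compose2[OF V_cont])

lemma G_plus_V_bounded:
  obtains M where "\<And>t p. t \<in> {0..1} \<Longrightarrow> p \<in> {A..B} \<Longrightarrow> \<bar>G p + V t\<bar> \<le> M"
  by (rule continuous_on_Icc_Times_bound[of 0 1 A B "\<lambda>t p. G p + V t"])
    (auto intro!: continuous_intros continuous_on_G_comp continuous_on_V_comp)

section \<open>Sub- and supersolutions\<close>

text \<open>The equation is rewritten as \<open>u' + \<lambda> u = k - G u - V + \<lambda> u\<close>; \<open>iter_op\<close> solves this
  linear equation with the right-hand side frozen at a given \<open>u\<close>. When \<open>\<lambda>\<close> exceeds the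
  Lipschitz constant of \<open>G\<close> the frozen right-hand side is monotone in \<open>u\<close>, hence so is
  \<open>iter_op\<close>. The constants \<open>b = y, c = 0\<close> prescribe the initial value \<open>y\<close>, and
  \<open>b = 0, c = 1 / (e\<^sup>\<lambda> - 1)\<close> prescribe equal values at \<open>0\<close> and \<open>1\<close>.\<close>

definition iter_integrand :: "real \<Rightarrow> real \<Rightarrow> (real \<Rightarrow> real) \<Rightarrow> real \<Rightarrow> real" where
  "iter_integrand k lam u t = exp (lam * t) * (k - G (u t) - V t + lam * u t)"

definition iter_integral :: "real \<Rightarrow> real \<Rightarrow> (real \<Rightarrow> real) \<Rightarrow> real \<Rightarrow> real" where
  "iter_integral k lam u x = integral {0..x} (iter_integrand k lam u)"

definition iter_op :: "real \<Rightarrow> real \<Rightarrow> real \<Rightarrow> real \<Rightarrow> (real \<Rightarrow> real) \<Rightarrow> real \<Rightarrow> real" where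
  "iter_op k lam b c u x =
     exp (- (lam * x)) * (b + c * iter_integral k lam u 1 + iter_integral k lam u x)"

abbreviation periodic_iter_op :: "real \<Rightarrow> real \<Rightarrow> (real \<Rightarrow> real) \<Rightarrow> real \<Rightarrow> real" where
  "periodic_iter_op k lam \<equiv> iter_op k lam 0 (1 / (exp lam - 1))"

lemma continuous_on_iter_integrand:
  "continuous_on {0..1} u \<Longrightarrow> continuous_on {0..1} (iter_integrand k lam u)"
  unfolding iter_integrand_def by (intro continuous_intros continuous_on_G_comp V_cont)

lemma iter_integral_has_derivative:
  assumes "continuous_on {0..1} u" "x \<in> {0..1}"
  shows "(iter_integral k lam u has_real_derivative iter_integrand k lam u x) (at x within {0..1})"
  unfolding iter_integral_def[abs_def]
  by (rule integral_has_real_derivative[OF continuous_on_iter_integrand[OF assms(1)] assms(2)])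

lemma iter_op_at_0: "iter_op k lam b c u 0 = b + c * iter_integral k lam u 1"
  by (simp add: iter_op_def iter_integral_def)

lemma periodic_iter_op_at_1:
  assumes "lam > 0"
  shows "periodic_iter_op k lam u 1 = periodic_iter_op k lam u 0"
proof -
  have "exp lam > 1" using assms by auto
  then show ?thesis by (simp add: iter_op_at_0) (simp add: iter_op_def exp_minus field_simps)
qed

lemma iter_op_has_derivative:
  assumes "continuous_on {0..1} u" "x \<in> {0..1}"
  shows "(iter_op k lam b c u has_real_derivative
           - lam * iter_op k lam b c u x + (k - G (u x) - V x + lam * u x)) (at x within {0..1})"
  unfolding iter_op_def[abs_def]
  by (rule derivative_eq_intros iter_integral_has_derivative[OF assms] refl
      | simp add: iter_integrand_def exp_minus field_simps)+

lemma continuous_on_iter_op: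
  "continuous_on {0..1} u \<Longrightarrow> continuous_on {0..1} (iter_op k lam b c u)"
  by (rule DERIV_continuous_on[OF iter_op_has_derivative]) auto

lemma solution_if_fixed_point:
  assumes "continuous_on {0..1} u" "\<And>x. x \<in> {0..1} \<Longrightarrow> u x = iter_op k lam b c u x"
  shows "solution k u"
  unfolding solution_def
proof
  fix x :: real assume x: "x \<in> {0..1}"
  have "(u has_real_derivative - lam * iter_op k lam b c u x + (k - G (u x) - V x + lam * u x))
      (at x within {0..1})"
    by (rule has_field_derivative_transform_within[OF iter_op_has_derivative[OF assms(1) x], where d=1])
      (use x assms(2) in auto)
  then show "(u has_real_derivative k - G (u x) - V x) (at x within {0..1})"
    by (rule DERIV_cong) (use x assms(2) in auto)
qed

lemma iter_op_mono:
  assumes u: "continuous_on {0..1} u" and v: "continuous_on {0..1} v" and "c \<ge> 0"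
    and le: "\<And>t. t \<in> {0..1} \<Longrightarrow> A \<le> u t \<and> u t \<le> v t \<and> v t \<le> B"
    and one_sided_Lipschitz: "\<And>p q. A \<le> p \<Longrightarrow> p \<le> q \<Longrightarrow> q \<le> B \<Longrightarrow> G q - G p \<le> lam * (q - p)"
    and x: "x \<in> {0..1}"
  shows "iter_op k lam b c u x \<le> iter_op k lam b c v x"
proof -
  have integrable: "iter_integrand k lam w integrable_on {0..y}"
    if "continuous_on {0..1} w" "y \<in> {0..1}" for w y
    by (rule integrable_continuous_interval, rule continuous_on_subset[OF continuous_on_iter_integrand])
      (use that in auto)
  have integral_le: "iter_integral k lam u y \<le> iter_integral k lam v y" if "y \<in> {0..1}" for y
    unfolding iter_integral_def
  proof (rule integral_le)
    show "iter_integrand k lam u integrable_on {0..y}" "iter_integrand k lam v integrable_on {0..y}"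
      using integrable u v that by auto
    show "iter_integrand k lam u t \<le> iter_integrand k lam v t" if "t \<in> {0..y}" for t
      using one_sided_Lipschitz[of "u t" "v t"] le[of t] that \<open>y \<in> {0..1}\<close>
      unfolding iter_integrand_def by (intro mult_left_mono) (auto simp: algebra_simps)
  qed
  have "c * iter_integral k lam u 1 \<le> c * iter_integral k lam v 1"
    using integral_le[of 1] \<open>c \<ge> 0\<close> by (intro mult_left_mono) auto
  then show ?thesis unfolding iter_op_def using integral_le[OF x] by (intro mult_left_mono) auto
qed

lemma iter_op_gap_has_derivative:
  assumes "continuous_on {0..1} a" "(a has_real_derivative a') (at x within {0..1})" "x \<in> {0..1}"
  shows "((\<lambda>x. exp (lam * x) * (iter_op k lam b c a x - a x)) has_real_derivative
            exp (lam * x) * (k - G (a x) - V x - a')) (at x within {0..1})"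
proof -
  have "exp (lam * x) * (iter_op k lam b c a x - a x) =
      b + c * iter_integral k lam a 1 + iter_integral k lam a x - exp (lam * x) * a x" for x
    by (simp add: iter_op_def exp_minus field_simps)
  then show ?thesis
    by (simp only:) (rule derivative_eq_intros iter_integral_has_derivative assms refl
        | simp add: iter_integrand_def algebra_simps)+
qed

lemma subsolution_iter_op_gap_mono:
  assumes "subsolution k a" "0 \<le> x" "x \<le> y" "y \<le> 1"
  shows "exp (lam * x) * (iter_op k lam b c a x - a x) \<le> exp (lam * y) * (iter_op k lam b c a y - a y)"
proof -
  obtain a' where a': "\<And>x. x \<in> {0..1} \<Longrightarrow> (a has_real_derivative a' x) (at x within {0..1})"
    "\<And>x. x \<in> {0..1} \<Longrightarrow> a' x \<le> k - G (a x) - V x"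
    using assms(1) unfolding subsolution_def by blast
  show ?thesis
    by (rule deriv_nonneg_imp_mono_on_Icc[OF iter_op_gap_has_derivative[OF
          subsolution_continuous[OF assms(1)] a'(1)]]) (use a'(2) assms in auto)
qed

lemma supersolution_iter_op_gap_antimono:
  assumes "supersolution k a" "0 \<le> x" "x \<le> y" "y \<le> 1"
  shows "exp (lam * y) * (iter_op k lam b c a y - a y) \<le> exp (lam * x) * (iter_op k lam b c a x - a x)"
proof -
  obtain a' where a': "\<And>x. x \<in> {0..1} \<Longrightarrow> (a has_real_derivative a' x) (at x within {0..1})"
    "\<And>x. x \<in> {0..1} \<Longrightarrow> a' x \<ge> k - G (a x) - V x"
    using assms(1) unfolding supersolution_def by blast
  have "- (exp (lam * x) * (iter_op k lam b c a x - a x)) \<le> - (exp (lam * y) * (iter_op k lam b c a y - a y))"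
    by (rule deriv_nonneg_imp_mono_on_Icc[OF DERIV_minus[OF iter_op_gap_has_derivative[OF
          supersolution_continuous[OF assms(1)] a'(1)]]])
      (use a'(2) assms in \<open>auto intro!: mult_nonneg_nonpos\<close>)
  then show ?thesis by simp
qed

lemma subsolution_le_iter_op:
  assumes "subsolution k a" "a 0 \<le> iter_op k lam b c a 0" "x \<in> {0..1}"
  shows "a x \<le> iter_op k lam b c a x"
proof -
  have "0 \<le> exp (lam * x) * (iter_op k lam b c a x - a x)"
    using subsolution_iter_op_gap_mono[OF assms(1), of 0 x lam b c] assms(2,3) by simp
  then show ?thesis by (simp add: zero_le_mult_iff)
qed

lemma supersolution_ge_iter_op:
  assumes "supersolution k a" "iter_op k lam b c a 0 \<le> a 0" "x \<in> {0..1}"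
  shows "iter_op k lam b c a x \<le> a x"
proof -
  have "exp (lam * x) * (iter_op k lam b c a x - a x) \<le> 0"
    using supersolution_iter_op_gap_antimono[OF assms(1), of 0 x lam b c] assms(2,3) by simp
  then show ?thesis by (simp add: mult_le_0_iff)
qed

lemma subsolution_le_periodic_iter_op:
  assumes "lam > 0" "subsolution k a" "a 0 \<le> a 1" "x \<in> {0..1}"
  shows "a x \<le> periodic_iter_op k lam a x"
proof (rule subsolution_le_iter_op[OF assms(2) _ assms(4)])
  define T where "T = periodic_iter_op k lam a 0"
  have "exp lam * (T - a 1) \<ge> T - a 0"
    using subsolution_iter_op_gap_mono[OF assms(2), of 0 1 lam 0 "1 / (exp lam - 1)"]
      periodic_iter_op_at_1[OF assms(1)] unfolding T_def by simp
  then have "(exp lam - 1) * (T - a 1) \<ge> 0" using assms(3) by (simp add: algebra_simps)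
  then show "a 0 \<le> T" using assms(1,3) by (simp add: zero_le_mult_iff)
qed

lemma supersolution_ge_periodic_iter_op:
  assumes "lam > 0" "supersolution k a" "a 1 \<le> a 0" "x \<in> {0..1}"
  shows "periodic_iter_op k lam a x \<le> a x"
proof (rule supersolution_ge_iter_op[OF assms(2) _ assms(4)])
  define T where "T = periodic_iter_op k lam a 0"
  have "exp lam * (T - a 1) \<le> T - a 0"
    using supersolution_iter_op_gap_antimono[OF assms(2), of 0 1 lam 0 "1 / (exp lam - 1)"]
      periodic_iter_op_at_1[OF assms(1)] unfolding T_def by simp
  then have "(exp lam - 1) * (T - a 1) \<le> 0" using assms(3) by (simp add: algebra_simps)
  then show "T \<le> a 0" using assms(1,3) by (simp add: mult_le_0_iff)
qed

lemma iter_integral_tendsto: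
  assumes cont: "\<And>n. continuous_on {0..1} (s n)"
    and range: "\<And>n t. t \<in> {0..1} \<Longrightarrow> s n t \<in> {A..B}"
    and lim: "\<And>t. t \<in> {0..1} \<Longrightarrow> (\<lambda>n. s n t) \<longlonglongrightarrow> u t" and x: "x \<in> {0..1}"
  shows "iter_integrand k lam u integrable_on {0..x}"
    "(\<lambda>n. iter_integral k lam (s n) x) \<longlonglongrightarrow> iter_integral k lam u x"
proof -
  obtain K where K: "\<And>t p. t \<in> {0..1} \<Longrightarrow> p \<in> {A..B} \<Longrightarrow> \<bar>exp (lam * t) * (k - G p - V t + lam * p)\<bar> \<le> K"
    by (rule continuous_on_Icc_Times_bound[of 0 1 A B "\<lambda>t p. exp (lam * t) * (k - G p - V t + lam * p)"])
      (auto intro!: continuous_intros continuous_on_G_comp continuous_on_V_comp)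
  have cont': "continuous_on {0..1} (iter_integrand k lam (s n))" for n
    using cont continuous_on_iter_integrand by blast
  have bound: "\<bar>iter_integrand k lam (s n) t\<bar> \<le> K" if "t \<in> {0..1}" for n t
    using K[OF that range[OF that]] unfolding iter_integrand_def .
  have lim': "(\<lambda>n. iter_integrand k lam (s n) t) \<longlonglongrightarrow> iter_integrand k lam u t" if "t \<in> {0..1}" for t
    unfolding iter_integrand_def
    by (intro tendsto_intros lim[OF that] isCont_tendsto_compose[of _ G] DERIV_isCont[OF G_deriv])
  show "iter_integrand k lam u integrable_on {0..x}"
    "(\<lambda>n. iter_integral k lam (s n) x) \<longlonglongrightarrow> iter_integral k lam u x"
    using bounded_convergence_Icc[OF cont' bound lim' x] unfolding iter_integral_def by blast+
qed

lemma iter_op_iterates: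
  fixes \<alpha> \<beta> :: "real \<Rightarrow> real"
  assumes "c \<ge> 0" and \<alpha>: "continuous_on {0..1} \<alpha>" and \<beta>: "continuous_on {0..1} \<beta>"
    and between: "\<And>x. x \<in> {0..1} \<Longrightarrow> A \<le> \<alpha> x \<and> \<alpha> x \<le> \<beta> x \<and> \<beta> x \<le> B"
    and one_sided_Lipschitz: "\<And>p q. A \<le> p \<Longrightarrow> p \<le> q \<Longrightarrow> q \<le> B \<Longrightarrow> G q - G p \<le> lam * (q - p)"
    and \<alpha>_le: "\<And>x. x \<in> {0..1} \<Longrightarrow> \<alpha> x \<le> iter_op k lam b c \<alpha> x"
    and \<beta>_ge: "\<And>x. x \<in> {0..1} \<Longrightarrow> iter_op k lam b c \<beta> x \<le> \<beta> x"
  shows "continuous_on {0..1} ((iter_op k lam b c ^^ n) \<alpha>) \<and> (\<forall>x\<in>{0..1}.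
    \<alpha> x \<le> (iter_op k lam b c ^^ n) \<alpha> x \<and> (iter_op k lam b c ^^ n) \<alpha> x \<le> (iter_op k lam b c ^^ Suc n) \<alpha> x \<and>
    (iter_op k lam b c ^^ Suc n) \<alpha> x \<le> \<beta> x)"
proof -
  define T where "T = iter_op k lam b c"
  define s where "s n = (T ^^ n) \<alpha>" for n
  have s_Suc: "s (Suc n) = T (s n)" for n by (simp add: s_def)
  have T_mono: "T u x \<le> T v x"
    if uv: "continuous_on {0..1} u" "continuous_on {0..1} v" and x: "x \<in> {0..1}"
      and le: "\<And>t. t \<in> {0..1} \<Longrightarrow> \<alpha> t \<le> u t \<and> u t \<le> v t \<and> v t \<le> \<beta> t" for u v x
    unfolding T_def
  proof (rule iter_op_mono[OF uv \<open>c \<ge> 0\<close> _ one_sided_Lipschitz x])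
    fix t :: real assume t: "t \<in> {0..1}"
    show "A \<le> u t \<and> u t \<le> v t \<and> v t \<le> B" using le[OF t] between[OF t] by linarith
  qed
  have T_le_\<beta>: "T u x \<le> \<beta> x"
    if "continuous_on {0..1} u" "\<And>t. t \<in> {0..1} \<Longrightarrow> \<alpha> t \<le> u t \<and> u t \<le> \<beta> t" "x \<in> {0..1}" for u x
    using T_mono[OF that(1) \<beta> that(3)] that(2) \<beta>_ge[OF that(3)] unfolding T_def by fastforce
  have "continuous_on {0..1} (s n) \<and>
    (\<forall>x\<in>{0..1}. \<alpha> x \<le> s n x \<and> s n x \<le> s (Suc n) x \<and> s (Suc n) x \<le> \<beta> x)"
  proof (induction n)
    case 0
    have "\<alpha> x \<le> T \<alpha> x \<and> T \<alpha> x \<le> \<beta> x" if "x \<in> {0..1}" for x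
      using \<alpha>_le[OF that] T_le_\<beta>[OF \<alpha> _ that] between unfolding T_def by fastforce
    then show ?case using \<alpha> unfolding s_def by auto
  next
    case (Suc n)
    then have cont: "continuous_on {0..1} (s (Suc n))"
      unfolding s_Suc T_def by (auto intro: continuous_on_iter_op)
    have "s (Suc n) x \<le> s (Suc (Suc n)) x" if "x \<in> {0..1}" for x
      using T_mono[of "s n" "s (Suc n)" x] Suc cont that unfolding s_Suc[of "Suc n"] s_Suc[of n] by blast
    moreover have "s (Suc (Suc n)) x \<le> \<beta> x" if "x \<in> {0..1}" for x
    proof -
      have "\<alpha> t \<le> s (Suc n) t \<and> s (Suc n) t \<le> \<beta> t" if "t \<in> {0..1}" for t
        using Suc that by (meson order_trans)
      then show ?thesis using T_le_\<beta>[OF cont _ that] unfolding s_Suc[of "Suc n"] by blast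
    qed
    ultimately show ?case using Suc cont by fastforce
  qed
  then show ?thesis unfolding s_def T_def .
qed

lemma monotone_iteration:
  fixes \<alpha> \<beta> :: "real \<Rightarrow> real"
  assumes "c \<ge> 0" and \<alpha>: "continuous_on {0..1} \<alpha>" and \<beta>: "continuous_on {0..1} \<beta>"
    and between: "\<And>x. x \<in> {0..1} \<Longrightarrow> A \<le> \<alpha> x \<and> \<alpha> x \<le> \<beta> x \<and> \<beta> x \<le> B"
    and one_sided_Lipschitz: "\<And>p q. A \<le> p \<Longrightarrow> p \<le> q \<Longrightarrow> q \<le> B \<Longrightarrow> G q - G p \<le> lam * (q - p)"
    and \<alpha>_le: "\<And>x. x \<in> {0..1} \<Longrightarrow> \<alpha> x \<le> iter_op k lam b c \<alpha> x"
    and \<beta>_ge: "\<And>x. x \<in> {0..1} \<Longrightarrow> iter_op k lam b c \<beta> x \<le> \<beta> x"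
  obtains u where "continuous_on {0..1} u"
    "\<And>x. x \<in> {0..1} \<Longrightarrow> \<alpha> x \<le> u x \<and> u x \<le> \<beta> x \<and> u x = iter_op k lam b c u x"
proof -
  define T where "T = iter_op k lam b c"
  define s where "s n = (T ^^ n) \<alpha>" for n
  have iterates: "continuous_on {0..1} (s n) \<and>
      (\<forall>x\<in>{0..1}. \<alpha> x \<le> s n x \<and> s n x \<le> s (Suc n) x \<and> s (Suc n) x \<le> \<beta> x)" for n
    unfolding s_def T_def by (rule iter_op_iterates[OF assms])
  have s_bounds: "\<alpha> x \<le> s n x \<and> s n x \<le> \<beta> x" if "x \<in> {0..1}" for n x
    using iterates[of n] that by (meson order_trans)
  define u where "u x = (SUP n. s n x)" for x
  have lim: "(\<lambda>n. s n x) \<longlonglongrightarrow> u x" if "x \<in> {0..1}" for x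
    unfolding u_def using iterates s_bounds that
    by (intro LIMSEQ_incseq_SUP) (auto intro!: bdd_aboveI[of _ "\<beta> x"] incseq_SucI)
  have bounds: "\<alpha> x \<le> u x \<and> u x \<le> \<beta> x" if "x \<in> {0..1}" for x
    using LIMSEQ_le_const[OF lim[OF that], of "\<alpha> x"] LIMSEQ_le_const2[OF lim[OF that], of "\<beta> x"]
      s_bounds[OF that] by auto
  have range: "s n t \<in> {A..B}" if "t \<in> {0..1}" for n t
    using s_bounds[OF that, of n] between[OF that] by auto
  have integrals: "iter_integrand k lam u integrable_on {0..x}"
      "(\<lambda>n. iter_integral k lam (s n) x) \<longlonglongrightarrow> iter_integral k lam u x" if "x \<in> {0..1}" for x
    using iter_integral_tendsto[of s, OF _ range lim that] iterates by blast+
  have fixed: "u x = T u x" if "x \<in> {0..1}" for x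
  proof -
    have "(\<lambda>n. T (s n) x) \<longlonglongrightarrow> T u x"
      unfolding T_def iter_op_def using integrals(2)[of 1] integrals(2)[OF that]
      by (intro tendsto_intros) auto
    moreover have "(\<lambda>n. T (s n) x) \<longlonglongrightarrow> u x"
      using LIMSEQ_Suc[OF lim[OF that]] unfolding s_def by simp
    ultimately show ?thesis using LIMSEQ_unique by blast
  qed
  have "continuous_on {0..1} (iter_integral k lam u)"
    unfolding iter_integral_def[abs_def] using integrals(1)[of 1]
    by (intro indefinite_integral_continuous_1) auto
  then have "continuous_on {0..1} (T u)" unfolding T_def iter_op_def by (intro continuous_intros)
  then have "continuous_on {0..1} u" by (rule continuous_on_eq) (use fixed in auto)
  then show ?thesis using that bounds fixed unfolding T_def by blast
qed

lemma one_sided_Lipschitz_on_range: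
  fixes \<alpha> \<beta> :: "real \<Rightarrow> real"
  assumes "continuous_on {0..1} \<alpha>" "continuous_on {0..1} \<beta>"
  obtains A B lam where "lam > 0" "\<And>x. x \<in> {0..1} \<Longrightarrow> A \<le> \<alpha> x \<and> \<beta> x \<le> B"
    "\<And>p q. A \<le> p \<Longrightarrow> p \<le> q \<Longrightarrow> q \<le> B \<Longrightarrow> G q - G p \<le> lam * (q - p)"
proof -
  obtain M1 where M1: "\<And>x. x \<in> {0..1} \<Longrightarrow> \<bar>\<alpha> x\<bar> \<le> M1"
    using continuous_on_Icc_bound[OF assms(1)] by blast
  obtain M2 where M2: "\<And>x. x \<in> {0..1} \<Longrightarrow> \<bar>\<beta> x\<bar> \<le> M2"
    using continuous_on_Icc_bound[OF assms(2)] by blast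
  define M where "M = \<bar>M1\<bar> + \<bar>M2\<bar>"
  have range: "- M \<le> \<alpha> x \<and> \<beta> x \<le> M" if "x \<in> {0..1}" for x
    using M1[OF that] M2[OF that] unfolding M_def by (auto simp: abs_le_iff)
  obtain L where L: "L > 0" "\<And>p q. p \<in> {- M..M} \<Longrightarrow> q \<in> {- M..M} \<Longrightarrow> \<bar>G p - G q\<bar> \<le> L * \<bar>p - q\<bar>"
    using G_Lipschitz_on_Icc by blast
  have "G q - G p \<le> L * (q - p)" if "- M \<le> p" "p \<le> q" "q \<le> M" for p q
    using L(2)[of q p] that by (simp add: abs_le_iff)
  then show ?thesis using range L(1) by (intro that[of L "- M" M])
qed

theorem periodic_solution_between:
  assumes sub: "subsolution k \<alpha>" "\<alpha> 0 \<le> \<alpha> 1" and super: "supersolution k \<beta>" "\<beta> 1 \<le> \<beta> 0"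
    and le: "\<And>x. x \<in> {0..1} \<Longrightarrow> \<alpha> x \<le> \<beta> x"
  obtains u where "periodic_solution k u" "\<And>x. x \<in> {0..1} \<Longrightarrow> \<alpha> x \<le> u x \<and> u x \<le> \<beta> x"
proof -
  have \<alpha>: "continuous_on {0..1} \<alpha>" and \<beta>: "continuous_on {0..1} \<beta>"
    using sub super by (auto intro: subsolution_continuous supersolution_continuous)
  obtain A B lam where lam: "lam > 0" and range: "\<And>x. x \<in> {0..1} \<Longrightarrow> A \<le> \<alpha> x \<and> \<beta> x \<le> B"
    and Lip: "\<And>p q. A \<le> p \<Longrightarrow> p \<le> q \<Longrightarrow> q \<le> B \<Longrightarrow> G q - G p \<le> lam * (q - p)"
    using one_sided_Lipschitz_on_range[OF \<alpha> \<beta>] by metis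
  obtain u where u: "continuous_on {0..1} u"
    "\<And>x. x \<in> {0..1} \<Longrightarrow> \<alpha> x \<le> u x \<and> u x \<le> \<beta> x \<and> u x = periodic_iter_op k lam u x"
    by (rule monotone_iteration[where b=0 and c="1 / (exp lam - 1)", OF _ \<alpha> \<beta> _ Lip
          subsolution_le_periodic_iter_op[OF lam sub] supersolution_ge_periodic_iter_op[OF lam super]])
      (use lam range le in auto)
  moreover have "u 0 = u 1" using u(2)[of 0] u(2)[of 1] periodic_iter_op_at_1[OF lam] by simp
  ultimately show ?thesis
    using that solution_if_fixed_point unfolding periodic_solution_def by blast
qed

theorem solution_between:
  assumes sub: "subsolution k \<alpha>" and super: "supersolution k \<beta>"
    and le: "\<And>x. x \<in> {0..1} \<Longrightarrow> \<alpha> x \<le> \<beta> x" and y: "\<alpha> 0 \<le> y" "y \<le> \<beta> 0"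
  obtains u where "solution k u" "u 0 = y" "\<And>x. x \<in> {0..1} \<Longrightarrow> \<alpha> x \<le> u x \<and> u x \<le> \<beta> x"
proof -
  have \<alpha>: "continuous_on {0..1} \<alpha>" and \<beta>: "continuous_on {0..1} \<beta>"
    using sub super by (auto intro: subsolution_continuous supersolution_continuous)
  obtain A B lam where range: "\<And>x. x \<in> {0..1} \<Longrightarrow> A \<le> \<alpha> x \<and> \<beta> x \<le> B"
    and Lip: "\<And>p q. A \<le> p \<Longrightarrow> p \<le> q \<Longrightarrow> q \<le> B \<Longrightarrow> G q - G p \<le> lam * (q - p)"
    using one_sided_Lipschitz_on_range[OF \<alpha> \<beta>] by metis
  obtain u where u: "continuous_on {0..1} u"
    "\<And>x. x \<in> {0..1} \<Longrightarrow> \<alpha> x \<le> u x \<and> u x \<le> \<beta> x \<and> u x = iter_op k lam y 0 u x"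
    by (rule monotone_iteration[where b=y and c=0, OF _ \<alpha> \<beta> _ Lip
          subsolution_le_iter_op[OF sub] supersolution_ge_iter_op[OF super]])
      (use range le y in \<open>auto simp: iter_op_at_0\<close>)
  moreover have "u 0 = y" using u(2)[of 0] by (simp add: iter_op_at_0)
  ultimately show ?thesis using that solution_if_fixed_point by blast
qed

section \<open>Ordering of periodic solutions\<close>

lemma solution_diff_has_derivative:
  assumes "solution k1 u1" "solution k2 u2" "x \<in> {0..1}"
  shows "((\<lambda>x. u2 x - u1 x) has_real_derivative (k2 - k1) - (G (u2 x) - G (u1 x)))
    (at x within {0..1})"
proof -
  have "(u1 has_real_derivative k1 - G (u1 x) - V x) (at x within {0..1})"
    "(u2 has_real_derivative k2 - G (u2 x) - V x) (at x within {0..1})"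
    using assms unfolding solution_def by blast+
  from DERIV_diff[OF this(2,1)] show ?thesis by (rule DERIV_cong) (simp add: algebra_simps)
qed

lemma periodic_solutions_strictly_ordered_if_less:
  assumes u1: "periodic_solution k1 u1" and u2: "periodic_solution k2 u2" and "k1 < k2"
  shows "(\<forall>x\<in>{0..1}. u1 x < u2 x) \<or> (\<forall>x\<in>{0..1}. u2 x < u1 x)"
proof -
  have cont: "continuous_on {0..1} (\<lambda>x. u2 x - u1 x)"
    using u1 u2 by (intro continuous_intros periodic_solution_continuous)
  have "u2 x - u1 x \<noteq> 0" if "x \<in> {0..1}" for x
  proof (rule periodic_nonzero_if_deriv_pos_at_zeros[OF solution_diff_has_derivative _ _ that])
    show "solution k1 u1" "solution k2 u2" "u2 0 - u1 0 = u2 1 - u1 1"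
      using u1 u2 unfolding periodic_solution_def by auto
  qed (use \<open>k1 < k2\<close> in auto)
  from continuous_nonzero_imp_const_sign[OF cont this] show ?thesis by auto
qed

lemma solutions_eq_or_apart:
  assumes u1: "solution k u1" and u2: "solution k u2"
  shows "(\<forall>x\<in>{0..1}. u1 x = u2 x) \<or> (\<forall>x\<in>{0..1}. u1 x \<noteq> u2 x)"
proof -
  have cont: "continuous_on {0..1} (\<lambda>x. min (u1 x) (u2 x))" "continuous_on {0..1} (\<lambda>x. max (u1 x) (u2 x))"
    using solution_continuous[OF u1] solution_continuous[OF u2] by (auto intro: continuous_intros)
  obtain L where "L > 0" and L: "\<And>x p q. x \<in> {0..1} \<Longrightarrow> p \<in> {min (u1 x) (u2 x)..max (u1 x) (u2 x)} \<Longrightarrow>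
      q \<in> {min (u1 x) (u2 x)..max (u1 x) (u2 x)} \<Longrightarrow> \<bar>G p - G q\<bar> \<le> L * \<bar>p - q\<bar>"
    using G_Lipschitz_between[OF cont] by blast
  have bound: "\<bar>(k - k) - (G (u2 x) - G (u1 x))\<bar> \<le> L * \<bar>u2 x - u1 x\<bar>" if "x \<in> {0..1}" for x
    using L[OF that, of "u2 x" "u1 x"] by simp
  show ?thesis
  proof (cases "\<exists>x0\<in>{0..1}. u1 x0 = u2 x0")
    case True
    then obtain x0 where x0: "x0 \<in> {0..1}" "u2 x0 - u1 x0 = 0" by auto
    note deriv = solution_diff_has_derivative[OF u1 u2]
    have "u2 x - u1 x = 0" if "x \<in> {0..1}" for x
      using gronwall_identically_zero[where w="\<lambda>x. u2 x - u1 x", OF deriv bound x0 that] .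
    then show ?thesis by simp
  qed auto
qed

lemma periodic_solutions_ordered:
  assumes u1: "periodic_solution k1 u1" and u2: "periodic_solution k2 u2"
  shows "(\<forall>x\<in>{0..1}. u1 x < u2 x) \<or> (\<forall>x\<in>{0..1}. u2 x < u1 x) \<or> (\<forall>x\<in>{0..1}. u1 x = u2 x)"
proof (cases k1 k2 rule: linorder_cases)
  case less
  then show ?thesis using periodic_solutions_strictly_ordered_if_less[OF u1 u2] by blast
next
  case greater
  then show ?thesis using periodic_solutions_strictly_ordered_if_less[OF u2 u1] by blast
next
  case equal
  have cont: "continuous_on {0..1} (\<lambda>x. u2 x - u1 x)"
    using u1 u2 by (intro continuous_intros periodic_solution_continuous)
  have "solution k1 u1" "solution k1 u2" using u1 u2 equal unfolding periodic_solution_def by auto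
  from solutions_eq_or_apart[OF this]
  consider "\<forall>x\<in>{0..1}. u1 x = u2 x" | "\<forall>x\<in>{0..1}. u1 x \<noteq> u2 x" by blast
  then show ?thesis
  proof cases
    case 2
    have "u2 x - u1 x \<noteq> 0" if "x \<in> {0..1}" for x using 2 that by fastforce
    from continuous_nonzero_imp_const_sign[OF cont this] show ?thesis by auto
  qed auto
qed

lemma periodic_solution_mean_less:
  assumes "periodic_solution k1 u1" "periodic_solution k2 u2" "\<And>x. x \<in> {0..1} \<Longrightarrow> u1 x < u2 x"
  shows "integral {0..1} u1 < integral {0..1} u2"
  using integral_less_if_continuous_less periodic_solution_continuous assms by blast

lemma periodic_solution_less_if_mean_less:
  assumes u1: "periodic_solution k1 u1" and u2: "periodic_solution k2 u2"
    and less: "integral {0..1} u1 < integral {0..1} u2" and "x \<in> {0..1}"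
  shows "u1 x < u2 x"
proof -
  have "\<not> (\<forall>x\<in>{0..1}. u2 x < u1 x)"
    using periodic_solution_mean_less[OF u2 u1] less by (meson not_less_iff_gr_or_eq)
  moreover have "\<not> (\<forall>x\<in>{0..1}. u1 x = u2 x)"
  proof
    assume "\<forall>x\<in>{0..1}. u1 x = u2 x"
    then have "integral {0..1} u1 = integral {0..1} u2" by (intro integral_cong) auto
    then show False using less by simp
  qed
  ultimately show ?thesis using periodic_solutions_ordered[OF u1 u2] \<open>x \<in> {0..1}\<close> by blast
qed

lemma periodic_solution_eq_if_mean_eq:
  assumes u1: "periodic_solution k1 u1" and u2: "periodic_solution k2 u2"
    and eq: "integral {0..1} u1 = integral {0..1} u2"
  shows "\<forall>x\<in>{0..1}. u1 x = u2 x" "k1 = k2"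
proof -
  have "\<not> (\<forall>x\<in>{0..1}. u1 x < u2 x)" "\<not> (\<forall>x\<in>{0..1}. u2 x < u1 x)"
    using periodic_solution_mean_less[OF u1 u2] periodic_solution_mean_less[OF u2 u1] eq
    by (metis less_irrefl)+
  then show eq: "\<forall>x\<in>{0..1}. u1 x = u2 x" using periodic_solutions_ordered[OF u1 u2] by blast
  show "k1 = k2"
    using solution_eq_imp_eq_const eq u1 u2 unfolding periodic_solution_def by blast
qed

lemma periodic_solution_le_if_mean_le:
  assumes "periodic_solution k1 u1" "periodic_solution k2 u2" "integral {0..1} u1 \<le> integral {0..1} u2"
    and "x \<in> {0..1}"
  shows "u1 x \<le> u2 x"
proof (cases "integral {0..1} u1 = integral {0..1} u2")
  case True
  then show ?thesis using periodic_solution_eq_if_mean_eq(1)[OF assms(1,2)] assms(4) by simp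
next
  case False
  then show ?thesis using periodic_solution_less_if_mean_less[OF assms(1,2) _ assms(4)] assms(3) by simp
qed

lemma periodic_solution_less_if_le_neq:
  assumes "periodic_solution k1 u1" "periodic_solution k2 u2" "\<And>x. x \<in> {0..1} \<Longrightarrow> u1 x \<le> u2 x"
    and "\<exists>x\<in>{0..1}. u1 x \<noteq> u2 x" and "x \<in> {0..1}"
  shows "u1 x < u2 x"
proof -
  obtain y where y: "y \<in> {0..1}" "u1 y \<noteq> u2 y" using assms(4) by blast
  moreover have "\<not> u2 y < u1 y" using assms(3)[OF y(1)] by simp
  ultimately have "\<not> (\<forall>x\<in>{0..1}. u2 x < u1 x)" "\<not> (\<forall>x\<in>{0..1}. u1 x = u2 x)" by blast+
  then show ?thesis using periodic_solutions_ordered[OF assms(1,2)] assms(5) by blast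
qed

lemma periodic_solution_mean_less_if_le_neq:
  assumes "periodic_solution k1 u1" "periodic_solution k2 u2" "\<And>x. x \<in> {0..1} \<Longrightarrow> u1 x \<le> u2 x"
    and "\<exists>x\<in>{0..1}. u1 x \<noteq> u2 x"
  shows "integral {0..1} u1 < integral {0..1} u2"
  using periodic_solution_mean_less[OF assms(1,2) periodic_solution_less_if_le_neq[OF assms]] .

section \<open>Time reversal and reflection\<close>

lemma cell_ode_time_reversal: "cell_ode (\<lambda>p. - G p) (\<lambda>p. - G' p) (\<lambda>x. - V (1 - x))"
proof
  show "((\<lambda>p. - G p) has_real_derivative - G' p) (at p)" for p by (rule DERIV_minus[OF G_deriv])
  show "continuous_on UNIV (\<lambda>p. - G' p)" by (intro continuous_intros G'_cont)
  show "continuous_on {0..1} (\<lambda>x. - V (1 - x))"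
    by (intro continuous_intros continuous_on_V_comp) auto
qed

lemma cell_ode_reflection: "cell_ode (\<lambda>p. G (- p)) (\<lambda>p. - G' (- p)) (\<lambda>x. V (1 - x))"
proof
  show "((\<lambda>p. G (- p)) has_real_derivative - G' (- p)) (at p)" for p
    using DERIV_chain2[OF G_deriv DERIV_minus[OF DERIV_ident]] by simp
  show "continuous_on UNIV (\<lambda>p. - G' (- p))"
    by (intro continuous_intros continuous_on_compose2[OF G'_cont]) auto
  show "continuous_on {0..1} (\<lambda>x. V (1 - x))"
    by (intro continuous_intros continuous_on_V_comp) auto
qed

lemma solution_time_reversal:
  assumes "solution k u"
  shows "cell_ode.solution (\<lambda>p. - G p) (\<lambda>x. - V (1 - x)) (- k) (\<lambda>x. u (1 - x))"
  unfolding cell_ode.solution_def[OF cell_ode_time_reversal]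
proof
  fix x :: real assume "x \<in> {0..1}"
  from has_real_derivative_reflect01[of u "\<lambda>x. k - G (u x) - V x", OF _ this] assms
  show "((\<lambda>x. u (1 - x)) has_real_derivative - k - - G (u (1 - x)) - - V (1 - x)) (at x within {0..1})"
    unfolding solution_def by (simp add: algebra_simps)
qed

lemma periodic_solution_time_reversal:
  "periodic_solution k u \<Longrightarrow>
    cell_ode.periodic_solution (\<lambda>p. - G p) (\<lambda>x. - V (1 - x)) (- k) (\<lambda>x. u (1 - x))"
  unfolding cell_ode.periodic_solution_def[OF cell_ode_time_reversal] periodic_solution_def
  using solution_time_reversal by simp

lemma subsolution_time_reversal:
  assumes "subsolution k a"
  shows "cell_ode.supersolution (\<lambda>p. - G p) (\<lambda>x. - V (1 - x)) (- k) (\<lambda>x. a (1 - x))"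
proof -
  obtain a' where a': "\<And>x. x \<in> {0..1} \<Longrightarrow> (a has_real_derivative a' x) (at x within {0..1})"
    "\<And>x. x \<in> {0..1} \<Longrightarrow> a' x \<le> k - G (a x) - V x"
    using assms unfolding subsolution_def by blast
  show ?thesis
    unfolding cell_ode.supersolution_def[OF cell_ode_time_reversal]
  proof (intro exI[of _ "\<lambda>x. - a' (1 - x)"] ballI conjI)
    fix x :: real assume x: "x \<in> {0..1}"
    show "((\<lambda>x. a (1 - x)) has_real_derivative - a' (1 - x)) (at x within {0..1})"
      by (rule has_real_derivative_reflect01[OF a'(1) x])
    have "1 - x \<in> {0..1}" using x by auto
    from a'(2)[OF this] show "- a' (1 - x) \<ge> - k - - G (a (1 - x)) - - V (1 - x)" by simp
  qed
qed

lemma supersolution_time_reversal: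
  assumes "supersolution k a"
  shows "cell_ode.subsolution (\<lambda>p. - G p) (\<lambda>x. - V (1 - x)) (- k) (\<lambda>x. a (1 - x))"
proof -
  obtain a' where a': "\<And>x. x \<in> {0..1} \<Longrightarrow> (a has_real_derivative a' x) (at x within {0..1})"
    "\<And>x. x \<in> {0..1} \<Longrightarrow> a' x \<ge> k - G (a x) - V x"
    using assms unfolding supersolution_def by blast
  show ?thesis
    unfolding cell_ode.subsolution_def[OF cell_ode_time_reversal]
  proof (intro exI[of _ "\<lambda>x. - a' (1 - x)"] ballI conjI)
    fix x :: real assume x: "x \<in> {0..1}"
    show "((\<lambda>x. a (1 - x)) has_real_derivative - a' (1 - x)) (at x within {0..1})"
      by (rule has_real_derivative_reflect01[OF a'(1) x])
    have "1 - x \<in> {0..1}" using x by auto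
    from a'(2)[OF this] show "- a' (1 - x) \<le> - k - - G (a (1 - x)) - - V (1 - x)" by simp
  qed
qed

lemma periodic_solution_reflection:
  assumes "periodic_solution k u"
  shows "cell_ode.periodic_solution (\<lambda>p. G (- p)) (\<lambda>x. V (1 - x)) k (\<lambda>x. - u (1 - x))"
  unfolding cell_ode.periodic_solution_def[OF cell_ode_reflection] cell_ode.solution_def[OF cell_ode_reflection]
proof (intro conjI ballI)
  fix x :: real assume "x \<in> {0..1}"
  from DERIV_minus[OF has_real_derivative_reflect01[of u "\<lambda>x. k - G (u x) - V x", OF _ this]] assms
  show "((\<lambda>x. - u (1 - x)) has_real_derivative k - G (- (- u (1 - x))) - V (1 - x)) (at x within {0..1})"
    unfolding periodic_solution_def solution_def by simp
qed (use assms in \<open>simp add: periodic_solution_def\<close>)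

section \<open>Intermediate periodic solutions\<close>

theorem periodic_solution_between_reversed:
  assumes sub: "subsolution k \<alpha>" "\<alpha> 0 \<le> \<alpha> 1" and super: "supersolution k \<beta>" "\<beta> 1 \<le> \<beta> 0"
    and le: "\<And>x. x \<in> {0..1} \<Longrightarrow> \<beta> x \<le> \<alpha> x"
  obtains u where "periodic_solution k u" "\<And>x. x \<in> {0..1} \<Longrightarrow> \<beta> x \<le> u x \<and> u x \<le> \<alpha> x"
proof -
  interpret T: cell_ode "\<lambda>p. - G p" "\<lambda>p. - G' p" "\<lambda>x. - V (1 - x)" by (rule cell_ode_time_reversal)
  obtain p where p: "T.periodic_solution (- k) p"
    "\<And>x. x \<in> {0..1} \<Longrightarrow> \<beta> (1 - x) \<le> p x \<and> p x \<le> \<alpha> (1 - x)"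
    by (rule T.periodic_solution_between[OF supersolution_time_reversal[OF super(1)] _
          subsolution_time_reversal[OF sub(1)]]) (use sub(2) super(2) le in auto)
  have "periodic_solution k (\<lambda>x. p (1 - x))" using T.periodic_solution_time_reversal[OF p(1)] by simp
  moreover have "\<beta> x \<le> p (1 - x) \<and> p (1 - x) \<le> \<alpha> x" if "x \<in> {0..1}" for x
    using p(2)[of "1 - x"] that by simp
  ultimately show ?thesis using that by blast
qed

lemma solution_above_stays_above:
  assumes f: "solution k f" and u: "solution k u" and le: "\<And>x. x \<in> {0..1} \<Longrightarrow> f x \<le> u x"
    and "f 0 < u 0" and x: "x \<in> {0..1}"
  shows "f x < u x"
proof -
  obtain L where "L > 0" and L: "\<And>x p q. x \<in> {0..1} \<Longrightarrow> p \<in> {f x..u x} \<Longrightarrow> q \<in> {f x..u x} \<Longrightarrow>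
      \<bar>G p - G q\<bar> \<le> L * \<bar>p - q\<bar>"
    using G_Lipschitz_between[OF solution_continuous[OF f] solution_continuous[OF u]] by blast
  have "(k - k) - (G (u x) - G (f x)) \<ge> - L * (u x - f x)" if "x \<in> {0..1}" for x
    using L[OF that, of "u x" "f x"] le[OF that] by (simp add: abs_le_iff)
  from gronwall_pos_propagates[where d="\<lambda>x. u x - f x", OF solution_diff_has_derivative[OF f u] this]
  show ?thesis using \<open>f 0 < u 0\<close> x by simp
qed

lemma periodic_solution_mean_between:
  assumes "periodic_solution k1 f1" "periodic_solution k p" "periodic_solution k2 f2"
    and "\<And>x. x \<in> {0..1} \<Longrightarrow> f1 x \<le> p x \<and> p x \<le> f2 x"
    and "\<exists>x\<in>{0..1}. f1 x \<noteq> p x" "\<exists>x\<in>{0..1}. p x \<noteq> f2 x"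
  shows "integral {0..1} f1 < integral {0..1} p \<and> integral {0..1} p < integral {0..1} f2"
proof
  show "integral {0..1} f1 < integral {0..1} p"
    by (rule periodic_solution_mean_less_if_le_neq[OF assms(1,2)]) (use assms(4,5) in auto)
  show "integral {0..1} p < integral {0..1} f2"
    by (rule periodic_solution_mean_less_if_le_neq[OF assms(2,3)]) (use assms(4,6) in auto)
qed

lemma periodic_solution_differs_if_const_differs:
  assumes "periodic_solution k1 u1" "periodic_solution k2 u2" "k1 \<noteq> k2"
  shows "\<exists>x\<in>{0..1}. u1 x \<noteq> u2 x"
  using solution_eq_imp_eq_const assms unfolding periodic_solution_def by blast

lemma subsolution_below_solution:
  assumes u: "solution k u"
    and Lip: "\<And>x. x \<in> {0..1} \<Longrightarrow> G (u x - c * (exp (L * x) - 1)) - G (u x) \<le> L * (c * (exp (L * x) - 1))"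
  shows "subsolution (k - c * L) (\<lambda>x. u x - c * (exp (L * x) - 1))"
  unfolding subsolution_def
proof (intro exI[of _ "\<lambda>x. (k - G (u x) - V x) - c * (L * exp (L * x))"] ballI conjI)
  fix x :: real assume x: "x \<in> {0..1}"
  show "((\<lambda>x. u x - c * (exp (L * x) - 1)) has_real_derivative (k - G (u x) - V x) - c * (L * exp (L * x)))
      (at x within {0..1})"
    using u x unfolding solution_def by (auto intro!: derivative_eq_intros)
  show "(k - G (u x) - V x) - c * (L * exp (L * x)) \<le> (k - c * L) - G (u x - c * (exp (L * x) - 1)) - V x"
    using Lip[OF x] by (simp add: algebra_simps)
qed

text \<open>Between two periodic solutions with equal \<open>k\<close>, a solution \<open>u\<close> that gains height over one
  period is pushed down into a strict subsolution for a smaller constant, which traps a periodic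
  solution between it and the upper one.\<close>

lemma periodic_solution_strictly_between_if_rising:
  assumes f1: "periodic_solution k f1" and f2: "periodic_solution k f2" and u: "solution k u"
    and between: "\<And>x. x \<in> {0..1} \<Longrightarrow> f1 x < u x \<and> u x < f2 x" and rising: "u 0 < u 1"
  obtains k' p where "periodic_solution k' p"
    "integral {0..1} f1 < integral {0..1} p" "integral {0..1} p < integral {0..1} f2"
proof -
  obtain L where L: "L > 0" "\<And>x p q. x \<in> {0..1} \<Longrightarrow> p \<in> {f1 x..f2 x} \<Longrightarrow> q \<in> {f1 x..f2 x} \<Longrightarrow>
      \<bar>G p - G q\<bar> \<le> L * \<bar>p - q\<bar>"
    using G_Lipschitz_between[OF periodic_solution_continuous[OF f1] periodic_solution_continuous[OF f2]]
    by blast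
  obtain c where c: "c > 0" and f1_below: "\<And>x. x \<in> {0..1} \<Longrightarrow> f1 x < u x - c * (exp (L * x) - 1)"
    and rising_v: "u 0 \<le> u 1 - c * (exp L - 1)"
    using exponential_push_down[OF periodic_solution_continuous[OF f1] solution_continuous[OF u] _ rising L(1)]
      between by blast
  define v where "v x = u x - c * (exp (L * x) - 1)" for x
  have v_le_u: "v x \<le> u x" if "x \<in> {0..1}" for x
    unfolding v_def using that c L by auto
  have f1_less_v: "f1 x < v x" if "x \<in> {0..1}" for x using f1_below[OF that] unfolding v_def .
  have "G (v x) - G (u x) \<le> L * (c * (exp (L * x) - 1))" if x: "x \<in> {0..1}" for x
  proof -
    have "v x \<in> {f1 x..f2 x}" "u x \<in> {f1 x..f2 x}"
      using between[OF x] f1_less_v[OF x] v_le_u[OF x] by auto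
    then have "\<bar>G (v x) - G (u x)\<bar> \<le> L * \<bar>v x - u x\<bar>" by (rule L(2)[OF x])
    moreover have "\<bar>v x - u x\<bar> = c * (exp (L * x) - 1)" using v_le_u[OF x] unfolding v_def by simp
    ultimately show ?thesis by simp
  qed
  then have sub: "subsolution (k - c * L) v"
    unfolding v_def by (rule subsolution_below_solution[OF u])
  have super: "supersolution (k - c * L) f2"
    using f2 c L unfolding periodic_solution_def by (intro solution_imp_supersolution) auto
  have "v 0 \<le> v 1" using rising_v unfolding v_def by simp
  moreover have "f2 1 \<le> f2 0" using f2 unfolding periodic_solution_def by simp
  moreover have "v x \<le> f2 x" if "x \<in> {0..1}" for x
    using v_le_u[OF that] between[OF that] by auto
  ultimately obtain p where p: "periodic_solution (k - c * L) p"
    "\<And>x. x \<in> {0..1} \<Longrightarrow> v x \<le> p x \<and> p x \<le> f2 x"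
    using periodic_solution_between[OF sub _ super] by blast
  have "f1 x \<le> p x \<and> p x \<le> f2 x" if "x \<in> {0..1}" for x
    using f1_less_v[OF that] p(2)[OF that] by auto
  moreover have "\<exists>x\<in>{0..1}. f1 x \<noteq> p x"
    using f1_less_v[of 0] p(2)[of 0] by (intro bexI[of _ 0]) auto
  moreover have "\<exists>x\<in>{0..1}. p x \<noteq> f2 x"
    using periodic_solution_differs_if_const_differs[OF p(1) f2] c L by simp
  ultimately have "integral {0..1} f1 < integral {0..1} p \<and> integral {0..1} p < integral {0..1} f2"
    by (rule periodic_solution_mean_between[OF f1 p(1) f2])
  then show ?thesis using that p(1) by blast
qed

lemma intermediate_periodic_solution_same_const:
  assumes f1: "periodic_solution k f1" and f2: "periodic_solution k f2"
    and less: "\<And>x. x \<in> {0..1} \<Longrightarrow> f1 x < f2 x"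
  obtains k' p where "periodic_solution k' p"
    "integral {0..1} f1 < integral {0..1} p" "integral {0..1} p < integral {0..1} f2"
proof -
  have s1: "solution k f1" and s2: "solution k f2" using f1 f2 unfolding periodic_solution_def by auto
  define y where "y = (f1 0 + f2 0) / 2"
  have y: "f1 0 < y" "y < f2 0" using less[of 0] unfolding y_def by auto
  obtain u where u: "solution k u" "u 0 = y" "\<And>x. x \<in> {0..1} \<Longrightarrow> f1 x \<le> u x \<and> u x \<le> f2 x"
    by (rule solution_between[where y=y, OF solution_imp_subsolution[OF s1] solution_imp_supersolution[OF s2]])
      (use less y in \<open>auto intro: less_imp_le\<close>)
  have between: "f1 x < u x \<and> u x < f2 x" if "x \<in> {0..1}" for x
    using solution_above_stays_above[OF s1 u(1) _ _ that] solution_above_stays_above[OF u(1) s2 _ _ that]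
      u(2,3) y by auto
  consider "u 0 = u 1" | "u 0 < u 1" | "u 1 < u 0" by linarith
  then show ?thesis
  proof cases
    case 1
    then have "periodic_solution k u" using u(1) unfolding periodic_solution_def by simp
    moreover have "\<exists>x\<in>{0..1}. f1 x \<noteq> u x" "\<exists>x\<in>{0..1}. u x \<noteq> f2 x"
      using between[of 0] by (auto intro!: bexI[of _ 0])
    ultimately show ?thesis
      using that periodic_solution_mean_between[OF f1 _ f2] between by (meson less_imp_le)
  next
    case 2
    from periodic_solution_strictly_between_if_rising[OF f1 f2 u(1) between this] that
    show ?thesis by blast
  next
    case 3
    interpret T: cell_ode "\<lambda>p. - G p" "\<lambda>p. - G' p" "\<lambda>x. - V (1 - x)" by (rule cell_ode_time_reversal)
    obtain k' p where p: "T.periodic_solution k' p"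
      "integral {0..1} (\<lambda>x. f1 (1 - x)) < integral {0..1} p" "integral {0..1} p < integral {0..1} (\<lambda>x. f2 (1 - x))"
      by (rule T.periodic_solution_strictly_between_if_rising[OF periodic_solution_time_reversal[OF f1]
            periodic_solution_time_reversal[OF f2] solution_time_reversal[OF u(1)]])
        (use between 3 in auto)
    have "periodic_solution (- k') (\<lambda>x. p (1 - x))" using T.periodic_solution_time_reversal[OF p(1)] by simp
    then show ?thesis using that p(2,3) integral_reflect01 by metis
  qed
qed

lemma intermediate_periodic_solution:
  assumes f1: "periodic_solution k1 f1" and f2: "periodic_solution k2 f2"
    and less: "integral {0..1} f1 < integral {0..1} f2"
  obtains k p where "periodic_solution k p"
    "integral {0..1} f1 < integral {0..1} p" "integral {0..1} p < integral {0..1} f2"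
proof -
  have f1_less_f2: "f1 x < f2 x" if "x \<in> {0..1}" for x
    by (rule periodic_solution_less_if_mean_less[OF f1 f2 less that])
  have s1: "solution k1 f1" and s2: "solution k2 f2" and per: "f1 0 = f1 1" "f2 0 = f2 1"
    using f1 f2 unfolding periodic_solution_def by auto
  define k where "k = (k1 + k2) / 2"
  have mean_between: "integral {0..1} f1 < integral {0..1} p \<and> integral {0..1} p < integral {0..1} f2"
    if p: "periodic_solution k p" "\<And>x. x \<in> {0..1} \<Longrightarrow> f1 x \<le> p x \<and> p x \<le> f2 x"
    and "k1 \<noteq> k2" for p
  proof -
    have "k1 \<noteq> k" "k \<noteq> k2" using \<open>k1 \<noteq> k2\<close> unfolding k_def by auto
    then have "\<exists>x\<in>{0..1}. f1 x \<noteq> p x" "\<exists>x\<in>{0..1}. p x \<noteq> f2 x"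
      using periodic_solution_differs_if_const_differs[OF f1 p(1)]
        periodic_solution_differs_if_const_differs[OF p(1) f2] by auto
    from periodic_solution_mean_between[OF f1 p(1) f2 p(2) this] show ?thesis .
  qed
  consider "k1 = k2" | "k1 < k2" | "k2 < k1" by linarith
  then show ?thesis
  proof cases
    case 1
    then show ?thesis using intermediate_periodic_solution_same_const[OF f1 _ f1_less_f2] f2 that by blast
  next
    case 2
    obtain p where p: "periodic_solution k p" "\<And>x. x \<in> {0..1} \<Longrightarrow> f1 x \<le> p x \<and> p x \<le> f2 x"
      by (rule periodic_solution_between[OF solution_imp_subsolution[OF s1, of k] _
            solution_imp_supersolution[OF s2, of k]])
        (use 2 per f1_less_f2 in \<open>auto simp: k_def intro: less_imp_le\<close>)
    from mean_between[OF p] 2 have "integral {0..1} f1 < integral {0..1} p \<and> integral {0..1} p < integral {0..1} f2"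
      by simp
    then show ?thesis using that p(1) by blast
  next
    case 3
    obtain p where p: "periodic_solution k p" "\<And>x. x \<in> {0..1} \<Longrightarrow> f1 x \<le> p x \<and> p x \<le> f2 x"
      by (rule periodic_solution_between_reversed[OF solution_imp_subsolution[OF s2, of k] _
            solution_imp_supersolution[OF s1, of k]])
        (use 3 per f1_less_f2 in \<open>auto simp: k_def intro: less_imp_le\<close>)
    from mean_between[OF p] 3 have "integral {0..1} f1 < integral {0..1} p \<and> integral {0..1} p < integral {0..1} f2"
      by simp
    then show ?thesis using that p(1) by blast
  qed
qed

section \<open>Every mean is attained\<close>

lemma solution_has_integral:
  assumes u: "solution k u" and x: "x \<in> {0..1}"
  shows "((\<lambda>t. k - G (u t) - V t) has_integral (u x - u 0)) {0..x}"
proof (rule fundamental_theorem_of_calculus)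
  fix t assume "t \<in> {0..x}"
  then have "(u has_real_derivative k - G (u t) - V t) (at t within {0..1})"
    using u x unfolding solution_def by auto
  then show "(u has_vector_derivative k - G (u t) - V t) (at t within {0..x})"
    unfolding has_real_derivative_iff_has_vector_derivative[symmetric]
    by (rule has_field_derivative_subset) (use x in auto)
qed (use x in auto)

lemma solution_if_integral_equation:
  assumes integrable: "(\<lambda>t. k - G (u t) - V t) integrable_on {0..1}"
    and eq: "\<And>x. x \<in> {0..1} \<Longrightarrow> u x = u 0 + integral {0..x} (\<lambda>t. k - G (u t) - V t)"
  shows "solution k u"
  unfolding solution_def
proof
  have "continuous_on {0..1} (\<lambda>x. u 0 + integral {0..x} (\<lambda>t. k - G (u t) - V t))"
    by (intro continuous_intros indefinite_integral_continuous_1 integrable)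
  then have "continuous_on {0..1} u" by (rule continuous_on_eq) (erule eq[symmetric])
  then have cont: "continuous_on {0..1} (\<lambda>t. k - G (u t) - V t)"
    by (intro continuous_intros continuous_on_G_comp V_cont)
  fix x :: real assume x: "x \<in> {0..1}"
  from DERIV_add[OF DERIV_const integral_has_real_derivative[OF cont x]]
  have "((\<lambda>x. u 0 + integral {0..x} (\<lambda>t. k - G (u t) - V t)) has_real_derivative 0 + (k - G (u x) - V x))
      (at x within {0..1})" .
  then have "(u has_real_derivative 0 + (k - G (u x) - V x)) (at x within {0..1})"
    by (rule has_field_derivative_transform_within[where d=1]) (use x in \<open>auto simp: eq[symmetric]\<close>)
  then show "(u has_real_derivative k - G (u x) - V x) (at x within {0..1})" by simp
qed

lemma periodic_solution_const_attained:
  assumes "periodic_solution k u"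
  obtains z where "z \<in> {0..1}" "k = G (u z) + V z"
proof -
  have u: "solution k u" "u 0 = u 1" using assms unfolding periodic_solution_def by auto
  have "\<exists>z. 0 < z \<and> z < 1 \<and> (\<lambda>v. (k - G (u z) - V z) * v) = (\<lambda>v. 0)"
  proof (rule Rolle_deriv[OF _ u(2) solution_continuous[OF u(1)]])
    fix x :: real assume x: "0 < x" "x < 1"
    have "at x within {0..1} = at x" by (rule at_within_interior) (use x in auto)
    then have "(u has_real_derivative k - G (u x) - V x) (at x)"
      using u(1) x unfolding solution_def by (metis atLeastAtMost_iff less_eq_real_def)
    then show "(u has_derivative (\<lambda>v. (k - G (u x) - V x) * v)) (at x)"
      by (simp add: has_field_derivative_def)
  qed simp
  then obtain z where "0 < z" "z < 1" "(\<lambda>v. (k - G (u z) - V z) * v) = (\<lambda>v. 0)" by blast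
  moreover from fun_cong[OF this(3), of 1] have "k - G (u z) - V z = 0" by simp
  ultimately show ?thesis using that[of z] by simp
qed

lemma periodic_solution_limit:
  assumes sols: "\<And>n. periodic_solution (ks n) (us n)"
    and incr: "\<And>n x. x \<in> {0..1} \<Longrightarrow> us n x \<le> us (Suc n) x"
    and range: "\<And>n x. x \<in> {0..1} \<Longrightarrow> A \<le> us n x \<and> us n x \<le> B"
    and ks: "ks \<longlonglongrightarrow> k"
  obtains u where "periodic_solution k u" "(\<lambda>n. integral {0..1} (us n)) \<longlonglongrightarrow> integral {0..1} u"
proof -
  define u where "u x = (SUP n. us n x)" for x
  have lim: "(\<lambda>n. us n x) \<longlonglongrightarrow> u x" if "x \<in> {0..1}" for x
    unfolding u_def using incr range that
    by (intro LIMSEQ_incseq_SUP) (auto intro!: bdd_aboveI[of _ B] incseq_SucI)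
  have cont: "continuous_on {0..1} (us n)" for n by (rule periodic_solution_continuous[OF sols])
  obtain M where M: "\<And>t p. t \<in> {0..1} \<Longrightarrow> p \<in> {A..B} \<Longrightarrow> \<bar>G p + V t\<bar> \<le> M"
    using G_plus_V_bounded by blast
  have "Bseq ks" using ks by (intro convergent_imp_Bseq convergentI)
  then obtain K where K: "\<And>n. \<bar>ks n\<bar> \<le> K" unfolding Bseq_def by auto
  define rhs where "rhs n t = ks n - G (us n t) - V t" for n t
  have rhs_lim: "(\<lambda>n. rhs n t) \<longlonglongrightarrow> k - G (u t) - V t" if "t \<in> {0..1}" for t
    unfolding rhs_def
    by (intro tendsto_intros ks lim[OF that] isCont_tendsto_compose[of _ G] DERIV_isCont[OF G_deriv])
  have rhs_bound: "\<bar>rhs n t\<bar> \<le> K + M" if "t \<in> {0..1}" for n t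
    using K[of n] M[OF that, of "us n t"] range[OF that, of n]
      abs_triangle_ineq4[of "ks n" "G (us n t) + V t"] unfolding rhs_def by (simp add: diff_diff_eq)
  have rhs_cont: "continuous_on {0..1} (rhs n)" for n
    unfolding rhs_def by (intro continuous_intros continuous_on_G_comp cont V_cont)
  have rhs_convergence: "(\<lambda>t. k - G (u t) - V t) integrable_on {0..x}"
      "(\<lambda>n. integral {0..x} (rhs n)) \<longlonglongrightarrow> integral {0..x} (\<lambda>t. k - G (u t) - V t)"
    if "x \<in> {0..1}" for x
    using bounded_convergence_Icc[OF rhs_cont rhs_bound rhs_lim that] by blast+
  have u_eq: "u x = u 0 + integral {0..x} (\<lambda>t. k - G (u t) - V t)" if x: "x \<in> {0..1}" for x
  proof -
    have "integral {0..x} (rhs n) = us n x - us n 0" for n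
      using solution_has_integral[OF _ x] sols[of n] unfolding periodic_solution_def rhs_def
      by (metis integral_unique)
    then have "(\<lambda>n. us n x - us n 0) \<longlonglongrightarrow> integral {0..x} (\<lambda>t. k - G (u t) - V t)"
      using rhs_convergence(2)[OF x] by simp
    moreover have "(\<lambda>n. us n x - us n 0) \<longlonglongrightarrow> u x - u 0" using lim x by (intro tendsto_intros) auto
    ultimately have "u x - u 0 = integral {0..x} (\<lambda>t. k - G (u t) - V t)" using LIMSEQ_unique by blast
    then show ?thesis by simp
  qed
  have "solution k u"
    by (rule solution_if_integral_equation[OF rhs_convergence(1) u_eq]) auto
  moreover have "u 0 = u 1"
    using LIMSEQ_unique[OF lim[of 0]] lim[of 1] sols unfolding periodic_solution_def by simp
  moreover have "(\<lambda>n. integral {0..1} (us n)) \<longlonglongrightarrow> integral {0..1} u"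
  proof (rule bounded_convergence_Icc(2)[OF cont _ lim])
    show "\<bar>us n t\<bar> \<le> \<bar>A\<bar> + \<bar>B\<bar>" if "t \<in> {0..1}" for n t using range[OF that, of n] by auto
  qed auto
  ultimately show ?thesis using that unfolding periodic_solution_def by blast
qed

lemma periodic_solution_const_bound:
  obtains M where "\<And>k u. periodic_solution k u \<Longrightarrow> (\<And>x. x \<in> {0..1} \<Longrightarrow> u x \<in> {A..B}) \<Longrightarrow> \<bar>k\<bar> \<le> M"
proof -
  obtain M where M: "\<And>t p. t \<in> {0..1} \<Longrightarrow> p \<in> {A..B} \<Longrightarrow> \<bar>G p + V t\<bar> \<le> M"
    using G_plus_V_bounded by blast
  have "\<bar>k\<bar> \<le> M" if sol: "periodic_solution k u" and range: "\<And>x. x \<in> {0..1} \<Longrightarrow> u x \<in> {A..B}" for k u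
  proof -
    obtain z where "z \<in> {0..1}" "k = G (u z) + V z"
      using periodic_solution_const_attained[OF sol] by blast
    then show ?thesis using M range by simp
  qed
  then show ?thesis using that by blast
qed

lemma increasing_periodic_solutions_limit:
  assumes sols: "\<And>n. periodic_solution (ks n) (us n)"
    and incr: "\<And>n x. x \<in> {0..1} \<Longrightarrow> us n x \<le> us (Suc n) x"
    and h: "periodic_solution kh h" and below_h: "\<And>n x. x \<in> {0..1} \<Longrightarrow> us n x \<le> h x"
  obtains k u where "periodic_solution k u" "(\<lambda>n. integral {0..1} (us n)) \<longlonglongrightarrow> integral {0..1} u"
proof -
  obtain A where A: "\<And>x. x \<in> {0..1} \<Longrightarrow> \<bar>us 0 x\<bar> \<le> A"
    using continuous_on_Icc_bound[OF periodic_solution_continuous[OF sols]] by blast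
  obtain B where B: "\<And>x. x \<in> {0..1} \<Longrightarrow> \<bar>h x\<bar> \<le> B"
    using continuous_on_Icc_bound[OF periodic_solution_continuous[OF h]] by blast
  have above_0: "us 0 x \<le> us n x" if "x \<in> {0..1}" for n x
  proof (induction n)
    case (Suc n)
    then show ?case using incr[OF that, of n] by linarith
  qed simp
  have range: "- A \<le> us n x \<and> us n x \<le> B" if "x \<in> {0..1}" for n x
    using A[OF that] B[OF that] above_0[OF that, of n] below_h[OF that, of n] by (auto simp: abs_le_iff)
  obtain M where "\<And>n. \<bar>ks n\<bar> \<le> M"
    using periodic_solution_const_bound[of "- A" B] sols range by (metis atLeastAtMost_iff)
  then have "bounded (range ks)" by (auto simp: bounded_iff)
  then obtain k r where r: "strict_mono r" "(ks \<circ> r) \<longlonglongrightarrow> k"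
    using bounded_imp_convergent_subsequence by blast
  have incr_r: "us (r n) x \<le> us (r (Suc n)) x" if "x \<in> {0..1}" for n x
  proof -
    have "r n \<le> r (Suc n)" using strict_mono_leD[OF r(1)] by simp
    then show ?thesis using lift_Suc_mono_le[of "\<lambda>n. us n x", OF incr[OF that]] by blast
  qed
  have range_r: "- A \<le> us (r n) x \<and> us (r n) x \<le> B" if "x \<in> {0..1}" for n x
    using range[OF that] .
  have "(\<lambda>n. ks (r n)) \<longlonglongrightarrow> k" using r(2) by (simp add: o_def)
  then obtain u where u: "periodic_solution k u" "(\<lambda>n. integral {0..1} (us (r n))) \<longlonglongrightarrow> integral {0..1} u"
    using periodic_solution_limit[of "\<lambda>n. ks (r n)" "\<lambda>n. us (r n)", OF sols incr_r range_r] by blast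
  have "incseq (\<lambda>n. integral {0..1} (us n))"
    using integral_le integrable_continuous_interval periodic_solution_continuous sols incr
    by (intro incseq_SucI) blast
  from incseq_tendsto_if_subseq_tendsto[OF this r(1) u(2)] show ?thesis using that u(1) by blast
qed

lemma max_mean_below:
  assumes low: "periodic_solution k0 u0" "integral {0..1} u0 \<le> \<theta>"
    and high: "periodic_solution k1 u1" "\<theta> < integral {0..1} u1"
  obtains k u where "periodic_solution k u" "integral {0..1} u \<le> \<theta>"
    "\<And>k' u'. periodic_solution k' u' \<Longrightarrow> integral {0..1} u' \<le> \<theta> \<Longrightarrow> integral {0..1} u' \<le> integral {0..1} u"
proof -
  define S where "S = {integral {0..1} u | k u. periodic_solution k u \<and> integral {0..1} u \<le> \<theta>}"
  have S: "S \<noteq> {}" "bdd_above S" using low unfolding S_def by (auto intro: bdd_aboveI[of _ \<theta>])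
  define s where "s = Sup S"
  have upper: "integral {0..1} u \<le> s" if "periodic_solution k u" "integral {0..1} u \<le> \<theta>" for k u
    unfolding s_def by (rule cSup_upper[OF _ S(2)]) (use that in \<open>auto simp: S_def\<close>)
  have "s \<in> S"
  proof (rule ccontr)
    assume "s \<notin> S"
    then obtain m where m: "\<And>n. m n \<in> S" "incseq m" "m \<longlonglongrightarrow> s"
      using incseq_in_set_tendsto_Sup[OF S] unfolding s_def by blast
    have "\<exists>k u. m n = integral {0..1} u \<and> periodic_solution k u \<and> integral {0..1} u \<le> \<theta>" for n
      using m(1)[of n] unfolding S_def by (rule CollectD)
    then obtain ks us where means: "\<And>n. integral {0..1} (us n) = m n"
      and sols: "\<And>n. periodic_solution (ks n) (us n)" and below: "\<And>n. integral {0..1} (us n) \<le> \<theta>"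
      by metis
    have incr: "us n x \<le> us (Suc n) x" if "x \<in> {0..1}" for n x
      using periodic_solution_le_if_mean_le[OF sols sols _ that] incseqD[OF m(2), of n "Suc n"] means by simp
    have below_u1: "us n x \<le> u1 x" if "x \<in> {0..1}" for n x
      using periodic_solution_less_if_mean_less[OF sols[of n] high(1) _ that] below[of n] high(2) by simp
    obtain k u where u: "periodic_solution k u" "m \<longlonglongrightarrow> integral {0..1} u"
      using increasing_periodic_solutions_limit[of ks us, OF sols incr high(1) below_u1] unfolding means
      by blast
    have "integral {0..1} u = s" using LIMSEQ_unique[OF u(2) m(3)] .
    moreover have "s \<le> \<theta>" unfolding s_def by (rule cSup_least[OF S(1)]) (auto simp: S_def)
    ultimately show False using \<open>s \<notin> S\<close> u(1) unfolding S_def by blast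
  qed
  then obtain k u where "periodic_solution k u" "integral {0..1} u \<le> \<theta>" "integral {0..1} u = s"
    unfolding S_def by blast
  with upper show ?thesis using that by simp
qed

lemma min_mean_above:
  assumes high: "periodic_solution k0 u0" "\<theta> \<le> integral {0..1} u0"
    and low: "periodic_solution k1 u1" "integral {0..1} u1 < \<theta>"
  obtains k u where "periodic_solution k u" "\<theta> \<le> integral {0..1} u"
    "\<And>k' u'. periodic_solution k' u' \<Longrightarrow> \<theta> \<le> integral {0..1} u' \<Longrightarrow> integral {0..1} u \<le> integral {0..1} u'"
proof -
  interpret R: cell_ode "\<lambda>p. G (- p)" "\<lambda>p. - G' (- p)" "\<lambda>x. V (1 - x)" by (rule cell_ode_reflection)
  have mean: "integral {0..1} (\<lambda>x. - u (1 - x)) = - integral {0..1} u" if "periodic_solution k u" for k u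
    by (rule mean_reflection[OF periodic_solution_continuous[OF that]])
  obtain k v where v: "R.periodic_solution k v" "integral {0..1} v \<le> - \<theta>"
    and max: "\<And>k' v'. R.periodic_solution k' v' \<Longrightarrow> integral {0..1} v' \<le> - \<theta> \<Longrightarrow>
      integral {0..1} v' \<le> integral {0..1} v"
  proof (rule R.max_mean_below[where \<theta>="- \<theta>", OF periodic_solution_reflection[OF high(1)] _
          periodic_solution_reflection[OF low(1)]])
    show "integral {0..1} (\<lambda>x. - u0 (1 - x)) \<le> - \<theta>" using mean[OF high(1)] high(2) by linarith
    show "- \<theta> < integral {0..1} (\<lambda>x. - u1 (1 - x))" using mean[OF low(1)] low(2) by linarith
  qed blast
  have u: "periodic_solution k (\<lambda>x. - v (1 - x))" using R.periodic_solution_reflection[OF v(1)] by simp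
  have "integral {0..1} (\<lambda>x. - v (1 - x)) \<le> integral {0..1} u'"
    if "periodic_solution k' u'" "\<theta> \<le> integral {0..1} u'" for k' u'
    using max[OF periodic_solution_reflection[OF that(1)]] mean[OF that(1)] mean[OF u] that(2) by simp
  then show ?thesis using that[OF u] v(2) mean[OF u] by simp
qed

lemma periodic_solution_with_large_mean:
  assumes "filterlim G at_top at_top"
  obtains k u where "periodic_solution k u" "M \<le> integral {0..1} u"
proof -
  obtain VM where VM: "\<And>x. x \<in> {0..1} \<Longrightarrow> \<bar>V x\<bar> \<le> VM" using continuous_on_Icc_bound[OF V_cont] by blast
  obtain N where N: "\<And>p. p \<ge> N \<Longrightarrow> G M + 2 * VM \<le> G p"
    using assms unfolding filterlim_at_top eventually_at_top_linorder by blast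
  define k where "k = G M + VM"
  define b where "b = max M N"
  have sub: "subsolution k (\<lambda>_. M)"
    unfolding subsolution_def k_def using VM by (intro exI[of _ "\<lambda>_. 0"]) (auto simp: abs_le_iff)
  have super: "supersolution k (\<lambda>_. b)"
    unfolding supersolution_def
  proof (intro exI[of _ "\<lambda>_. 0"] ballI conjI)
    fix x :: real assume "x \<in> {0..1}"
    then show "k - G b - V x \<le> 0" using VM[of x] N[of b] unfolding k_def b_def by (simp add: abs_le_iff)
  qed simp
  obtain u where u: "periodic_solution k u" "\<And>x. x \<in> {0..1} \<Longrightarrow> M \<le> u x \<and> u x \<le> b"
    by (rule periodic_solution_between[OF sub _ super]) (auto simp: b_def)
  have "integral {0..1::real} (\<lambda>_. M) \<le> integral {0..1} u"
    using u(2) by (intro integral_le integrable_continuous_interval periodic_solution_continuous[OF u(1)]) auto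
  then show ?thesis using that u(1) by simp
qed

lemma periodic_solution_with_small_mean:
  assumes "filterlim G at_top at_bot"
  obtains k u where "periodic_solution k u" "integral {0..1} u \<le> M"
proof -
  interpret R: cell_ode "\<lambda>p. G (- p)" "\<lambda>p. - G' (- p)" "\<lambda>x. V (1 - x)" by (rule cell_ode_reflection)
  have "filterlim (\<lambda>p. G (- p)) at_top at_top"
    by (rule filterlim_compose[OF assms filterlim_uminus_at_bot_at_top])
  then obtain k v where v: "R.periodic_solution k v" "- M \<le> integral {0..1} v"
    by (rule R.periodic_solution_with_large_mean)
  have "periodic_solution k (\<lambda>x. - v (1 - x))" using R.periodic_solution_reflection[OF v(1)] by simp
  moreover have "integral {0..1} (\<lambda>x. - v (1 - x)) = - integral {0..1} v"
    by (rule mean_reflection[OF R.periodic_solution_continuous[OF v(1)]])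
  ultimately show ?thesis using that v(2) by simp
qed

theorem periodic_solution_with_mean:
  assumes "filterlim G at_top at_top" "filterlim G at_top at_bot"
  obtains k u where "periodic_solution k u" "integral {0..1} u = \<theta>"
proof -
  have "\<exists>k u. periodic_solution k u \<and> integral {0..1} u = \<theta>"
  proof (rule ccontr)
    assume "\<nexists>k u. periodic_solution k u \<and> integral {0..1} u = \<theta>"
    then have mean_neq: "integral {0..1} u \<noteq> \<theta>" if "periodic_solution k u" for k u
      using that by blast
    obtain k0 u0 where u0: "periodic_solution k0 u0" "integral {0..1} u0 \<le> \<theta>"
      using periodic_solution_with_small_mean[OF assms(2)] by blast
    obtain k1 u1 where u1: "periodic_solution k1 u1" "\<theta> + 1 \<le> integral {0..1} u1"
      using periodic_solution_with_large_mean[OF assms(1)] by blast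
    obtain ka fa where fa: "periodic_solution ka fa" "integral {0..1} fa \<le> \<theta>" and max:
      "\<And>k u. periodic_solution k u \<Longrightarrow> integral {0..1} u \<le> \<theta> \<Longrightarrow> integral {0..1} u \<le> integral {0..1} fa"
      by (rule max_mean_below[OF u0 u1(1)]) (use u1(2) in auto)
    have fa_less: "integral {0..1} fa < \<theta>" using fa mean_neq by fastforce
    obtain kb fb where fb: "periodic_solution kb fb" "\<theta> \<le> integral {0..1} fb" and min:
      "\<And>k u. periodic_solution k u \<Longrightarrow> \<theta> \<le> integral {0..1} u \<Longrightarrow> integral {0..1} fb \<le> integral {0..1} u"
      by (rule min_mean_above[OF u1(1) _ fa(1) fa_less]) (use u1(2) in auto)
    have fb_greater: "\<theta> < integral {0..1} fb" using fb mean_neq by fastforce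
    obtain k p where p: "periodic_solution k p"
      "integral {0..1} fa < integral {0..1} p" "integral {0..1} p < integral {0..1} fb"
      using intermediate_periodic_solution[OF fa(1) fb(1)] fa_less fb_greater by auto
    show False using max[OF p(1)] min[OF p(1)] p(2,3) by linarith
  qed
  then show ?thesis using that by blast
qed

section \<open>The effective Hamiltonian\<close>

lemma cell_sol_periodic_ext:
  assumes V_periodic: "\<And>x. V (x + 1) = V x" and V_cont_UNIV: "continuous_on UNIV V"
    and u: "periodic_solution k u"
  shows "cell_sol G V (integral {0..1} u) k (periodic_ext u)"
proof -
  have u01: "u 0 = u 1" and deriv: "\<And>t. t \<in> {0..1} \<Longrightarrow> (u has_real_derivative k - G (u t) - V t) (at t within {0..1})"
    using u unfolding periodic_solution_def solution_def by auto
  have "V 0 = V 1" using V_periodic[of 0] by simp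
  then have "k - G (u 0) - V 0 = k - G (u 1) - V 1" using u01 by simp
  from periodic_ext_has_derivative[where D="\<lambda>t. k - G (u t) - V t", OF deriv u01 this]
  have "(periodic_ext u has_real_derivative k - G (u (frac x)) - V (frac x)) (at x)" for x .
  then have deriv_ext: "(periodic_ext u has_real_derivative k - G (periodic_ext u x) - V x) (at x)" for x
    using periodic_frac[of V, OF V_periodic] unfolding periodic_ext_def by simp
  have "continuous_on UNIV (\<lambda>x. k - G (periodic_ext u x) - V x)"
    using has_real_derivative_imp_continuous_on[OF deriv_ext]
    by (intro continuous_intros continuous_on_G_comp V_cont_UNIV)
  moreover have "integral {0..1} (periodic_ext u) = integral {0..1} u"
    by (rule integral_cong) (use periodic_ext_eq_shift[OF u01, of _ 0] in simp)
  ultimately show ?thesis unfolding cell_sol_def using periodic_ext_periodic deriv_ext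
    by (intro conjI exI[of _ "\<lambda>x. k - G (periodic_ext u x) - V x"]) auto
qed

lemma periodic_solution_if_cell_sol:
  assumes "cell_sol G V \<theta> c f"
  shows "periodic_solution c f" "integral {0..1} f = \<theta>"
proof -
  obtain f' where "\<And>x. (f has_real_derivative f' x) (at x)" "\<And>x. f' x + G (f x) + V x = c"
    using assms unfolding cell_sol_def by blast
  then have "(f has_real_derivative c - G (f x) - V x) (at x)" for x
    by (metis add.commute diff_diff_eq eq_diff_eq)
  then have "solution c f" unfolding solution_def by (auto intro: has_field_derivative_at_within)
  moreover have "f 0 = f 1" using assms unfolding cell_sol_def by (metis add_0)
  ultimately show "periodic_solution c f" unfolding periodic_solution_def by simp
  show "integral {0..1} f = \<theta>" using assms unfolding cell_sol_def by simp
qed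

lemma cell_sol_unique:
  assumes f1: "cell_sol G V \<theta> c1 f1" and f2: "cell_sol G V \<theta> c2 f2"
  shows "c1 = c2" "f1 = f2"
proof -
  note sol1 = periodic_solution_if_cell_sol[OF f1] and sol2 = periodic_solution_if_cell_sol[OF f2]
  show "c1 = c2" using periodic_solution_eq_if_mean_eq(2)[OF sol1(1) sol2(1)] sol1(2) sol2(2) by simp
  have eq: "f1 x = f2 x" if "x \<in> {0..1}" for x
    using periodic_solution_eq_if_mean_eq(1)[OF sol1(1) sol2(1)] sol1(2) sol2(2) that by simp
  have "f1 (frac x) = f2 (frac x)" for x by (rule eq) (simp add: frac_lt_1 less_imp_le)
  then show "f1 = f2"
    using periodic_frac[of f1] periodic_frac[of f2] f1 f2 unfolding cell_sol_def by fastforce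
qed

lemma Hbar_fsol_eq:
  assumes "cell_sol G V \<theta> c f"
  shows "Hbar G V \<theta> = c" "fsol G V \<theta> = f"
proof -
  show H: "Hbar G V \<theta> = c"
    unfolding Hbar_def using assms cell_sol_unique(1)[OF assms] by blast
  show "fsol G V \<theta> = f"
    unfolding fsol_def H using assms cell_sol_unique(2)[OF assms] by blast
qed

section \<open>Perturbation along the linearised equation\<close>

lemma G_mean_value:
  obtains z where "z \<in> {min p (p + d)..max p (p + d)}" "G (p + d) - G p = d * G' z"
proof (cases d "0 :: real" rule: linorder_cases)
  case less
  obtain z where "p + d < z" "z < p" "G p - G (p + d) = (p - (p + d)) * G' z"
    using MVT2[of "p + d" p G G'] G_deriv less by auto
  then show ?thesis using that[of z] by (simp add: algebra_simps)
next
  case equal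
  then show ?thesis using that[of p] by simp
next
  case greater
  obtain z where "p < z" "z < p + d" "G (p + d) - G p = (p + d - p) * G' z"
    using MVT2[of p "p + d" G G'] G_deriv greater by auto
  then show ?thesis using that[of z] by simp
qed

lemma G_uniform_linearization:
  assumes "\<eta> > 0"
  obtains \<rho> where "\<rho> > 0" "\<And>p d. p \<in> {-R..R} \<Longrightarrow> p + d \<in> {-R..R} \<Longrightarrow> \<bar>d\<bar> < \<rho> \<Longrightarrow>
    \<bar>G (p + d) - G p - G' p * d\<bar> \<le> \<eta> * \<bar>d\<bar>"
proof -
  have "uniformly_continuous_on {-R..R} G'"
    by (rule compact_uniformly_continuous[OF continuous_on_subset[OF G'_cont]]) auto
  then obtain \<rho> where \<rho>: "\<rho> > 0" "\<And>p q. p \<in> {-R..R} \<Longrightarrow> q \<in> {-R..R} \<Longrightarrow> \<bar>q - p\<bar> < \<rho> \<Longrightarrow>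
      \<bar>G' q - G' p\<bar> < \<eta>"
    unfolding uniformly_continuous_on_def dist_real_def using assms by metis
  have "\<bar>G (p + d) - G p - G' p * d\<bar> \<le> \<eta> * \<bar>d\<bar>"
    if p: "p \<in> {-R..R}" "p + d \<in> {-R..R}" and d: "\<bar>d\<bar> < \<rho>" for p d
  proof -
    obtain z where z: "z \<in> {min p (p + d)..max p (p + d)}" "G (p + d) - G p = d * G' z"
      by (rule G_mean_value)
    have "z \<in> {-R..R}" "\<bar>z - p\<bar> \<le> \<bar>d\<bar>" using z(1) p by (auto simp: abs_le_iff)
    then have "\<bar>G' z - G' p\<bar> \<le> \<eta>" using \<rho>(2)[OF p(1)] d by fastforce
    then have "\<bar>d\<bar> * \<bar>G' z - G' p\<bar> \<le> \<bar>d\<bar> * \<eta>" by (intro mult_left_mono) auto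
    moreover have "G (p + d) - G p - G' p * d = d * (G' z - G' p)" using z(2) by (simp add: algebra_simps)
    ultimately show ?thesis by (simp add: abs_mult mult.commute)
  qed
  then show ?thesis using that \<rho>(1) by blast
qed

lemma small_perturbation_remainder:
  fixes f g :: "real \<Rightarrow> real"
  assumes f: "continuous_on {0..1} f" and g: "continuous_on {0..1} g" and "\<bar>\<sigma>\<bar> = 1"
  obtains h0 where "h0 > 0" "\<And>h x. 0 < h \<Longrightarrow> h < h0 \<Longrightarrow> x \<in> {0..1} \<Longrightarrow>
    \<bar>G (f x + \<sigma> * h * g x) - G (f x) - G' (f x) * (\<sigma> * h * g x)\<bar> \<le> h / 4"
proof -
  obtain F where F: "\<And>x. x \<in> {0..1} \<Longrightarrow> \<bar>f x\<bar> \<le> F" using continuous_on_Icc_bound[OF f] by blast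
  obtain B0 where B0: "\<And>x. x \<in> {0..1} \<Longrightarrow> \<bar>g x\<bar> \<le> B0" using continuous_on_Icc_bound[OF g] by blast
  define B where "B = \<bar>B0\<bar> + 1"
  have B: "B > 0" "\<And>x. x \<in> {0..1} \<Longrightarrow> \<bar>g x\<bar> \<le> B" using B0 unfolding B_def by force+
  obtain \<rho> where \<rho>: "\<rho> > 0" "\<And>p d. p \<in> {-(\<bar>F\<bar> + B)..\<bar>F\<bar> + B} \<Longrightarrow> p + d \<in> {-(\<bar>F\<bar> + B)..\<bar>F\<bar> + B} \<Longrightarrow>
      \<bar>d\<bar> < \<rho> \<Longrightarrow> \<bar>G (p + d) - G p - G' p * d\<bar> \<le> 1 / (4 * B) * \<bar>d\<bar>"
    using G_uniform_linearization[where \<eta>="1 / (4 * B)" and R="\<bar>F\<bar> + B"] B(1) by auto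
  have "\<bar>G (f x + \<sigma> * h * g x) - G (f x) - G' (f x) * (\<sigma> * h * g x)\<bar> \<le> h / 4"
    if h: "0 < h" "h < min 1 (\<rho> / B)" and x: "x \<in> {0..1}" for h x
  proof -
    define d where "d = \<sigma> * h * g x"
    have d: "\<bar>d\<bar> \<le> h * B"
      using B(2)[OF x] h \<open>\<bar>\<sigma>\<bar> = 1\<close> unfolding d_def by (simp add: abs_mult mult_left_mono)
    moreover have "h * B < \<rho>" "h * B \<le> B" using h B(1) by (auto simp: field_simps)
    ultimately have "f x \<in> {-(\<bar>F\<bar> + B)..\<bar>F\<bar> + B}" "f x + d \<in> {-(\<bar>F\<bar> + B)..\<bar>F\<bar> + B}" "\<bar>d\<bar> < \<rho>"
      using F[OF x] by (auto simp: abs_le_iff)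
    then have "\<bar>G (f x + d) - G (f x) - G' (f x) * d\<bar> \<le> 1 / (4 * B) * \<bar>d\<bar>" by (rule \<rho>(2))
    also have "\<dots> \<le> 1 / (4 * B) * (h * B)" using d B(1) by (intro mult_left_mono) auto
    also have "\<dots> = h / 4" using B(1) by simp
    finally show ?thesis unfolding d_def .
  qed
  then show ?thesis using that[of "min 1 (\<rho> / B)"] \<rho>(1) B(1) by auto
qed

lemma periodic_solution_sign_less:
  assumes u1: "periodic_solution k1 u1" and u2: "periodic_solution k2 u2" and \<sigma>: "\<sigma> = 1 \<or> \<sigma> = -1"
    and le: "\<And>x. x \<in> {0..1} \<Longrightarrow> \<sigma> * u1 x \<le> \<sigma> * u2 x" and neq: "\<exists>x\<in>{0..1}. u1 x \<noteq> u2 x"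
    and x: "x \<in> {0..1}"
  shows "\<sigma> * u1 x < \<sigma> * u2 x"
  using \<sigma>
proof
  assume "\<sigma> = 1"
  then show ?thesis using periodic_solution_less_if_le_neq[OF u1 u2 _ neq x] le by simp
next
  assume "\<sigma> = -1"
  moreover have "\<exists>x\<in>{0..1}. u2 x \<noteq> u1 x" using neq by (metis (full_types))
  ultimately show ?thesis using periodic_solution_less_if_le_neq[OF u2 u1 _ _ x] le by simp
qed

lemma periodic_solution_between_strict_supersolution:
  assumes f: "periodic_solution c f" and "c < k" and \<sigma>: "\<sigma> = 1 \<or> \<sigma> = -1"
    and \<psi>_deriv: "\<And>x. x \<in> {0..1} \<Longrightarrow> (\<psi> has_real_derivative \<psi>' x) (at x within {0..1})"
    and strict: "\<And>x. x \<in> {0..1} \<Longrightarrow> k - G (\<psi> x) - V x < \<psi>' x"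
    and \<psi>_periodic: "\<psi> 0 = \<psi> 1" and f_\<psi>: "\<And>x. x \<in> {0..1} \<Longrightarrow> \<sigma> * f x \<le> \<sigma> * \<psi> x"
  obtains p where "periodic_solution k p" "\<And>x. x \<in> {0..1} \<Longrightarrow> \<sigma> * f x < \<sigma> * p x \<and> \<sigma> * p x < \<sigma> * \<psi> x"
proof -
  have f_sol: "solution c f" and f_periodic: "f 0 = f 1" using f unfolding periodic_solution_def by auto
  have super: "supersolution k \<psi>"
    unfolding supersolution_def using \<psi>_deriv strict by (intro exI[of _ \<psi>']) (auto intro: less_imp_le)
  have sub: "subsolution k f" using solution_imp_subsolution[OF f_sol] \<open>c < k\<close> by simp
  obtain p where p: "periodic_solution k p"
    and between: "\<And>x. x \<in> {0..1} \<Longrightarrow> \<sigma> * f x \<le> \<sigma> * p x \<and> \<sigma> * p x \<le> \<sigma> * \<psi> x"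
    using \<sigma>
  proof
    assume "\<sigma> = 1"
    then have le: "f x \<le> \<psi> x" if "x \<in> {0..1}" for x using f_\<psi>[OF that] by simp
    obtain p where "periodic_solution k p" "\<And>x. x \<in> {0..1} \<Longrightarrow> f x \<le> p x \<and> p x \<le> \<psi> x"
      by (rule periodic_solution_between[OF sub _ super _ le]) (use f_periodic \<psi>_periodic in auto)
    then show thesis using that \<open>\<sigma> = 1\<close> by simp
  next
    assume "\<sigma> = -1"
    then have le: "\<psi> x \<le> f x" if "x \<in> {0..1}" for x using f_\<psi>[OF that] by simp
    obtain p where "periodic_solution k p" "\<And>x. x \<in> {0..1} \<Longrightarrow> \<psi> x \<le> p x \<and> p x \<le> f x"
      by (rule periodic_solution_between_reversed[OF sub _ super _ le]) (use f_periodic \<psi>_periodic in auto)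
    then show thesis using that \<open>\<sigma> = -1\<close> by simp
  qed
  have p_sol: "solution k p" and p_periodic: "p 0 = p 1" using p unfolding periodic_solution_def by auto
  have nonzero: "\<psi> x - p x \<noteq> 0" if "x \<in> {0..1}" for x
  proof (rule periodic_nonzero_if_deriv_pos_at_zeros[OF _ _ _ that])
    show "((\<lambda>x. \<psi> x - p x) has_real_derivative \<psi>' x - (k - G (p x) - V x)) (at x within {0..1})"
      if "x \<in> {0..1}" for x
      using DERIV_diff[OF \<psi>_deriv[OF that]] p_sol that unfolding solution_def by blast
    show "\<psi> 0 - p 0 = \<psi> 1 - p 1" using \<psi>_periodic p_periodic by simp
    show "\<psi>' x - (k - G (p x) - V x) > 0" if "x \<in> {0..1}" "\<psi> x - p x = 0" for x
      using strict[OF that(1)] that(2) by simp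
  qed
  have "\<exists>x\<in>{0..1}. f x \<noteq> p x"
    using periodic_solution_differs_if_const_differs[OF f p] \<open>c < k\<close> by simp
  then have "\<sigma> * f x < \<sigma> * p x" if "x \<in> {0..1}" for x
    using periodic_solution_sign_less[OF f p \<sigma> _ _ that] between by blast
  moreover have "\<sigma> * p x < \<sigma> * \<psi> x" if "x \<in> {0..1}" for x
    using between[OF that] nonzero[OF that] \<sigma> by auto
  ultimately show ?thesis using that p by blast
qed

theorem perturbed_periodic_solution:
  assumes f: "periodic_solution c f"
    and g_deriv: "\<And>x. x \<in> {0..1} \<Longrightarrow> (g has_real_derivative \<sigma> - G' (f x) * g x) (at x within {0..1})"
    and g_periodic: "g 0 = g 1" and g_pos: "\<And>x. x \<in> {0..1} \<Longrightarrow> g x > 0" and \<sigma>: "\<sigma> = 1 \<or> \<sigma> = -1"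
  obtains h0 where "h0 > 0" "\<And>h. 0 < h \<Longrightarrow> h < h0 \<Longrightarrow> \<exists>p. periodic_solution (c + h / 2) p \<and>
      \<sigma> * integral {0..1} f < \<sigma> * integral {0..1} p \<and>
      \<sigma> * integral {0..1} p < \<sigma> * integral {0..1} f + h * integral {0..1} g"
proof -
  have f_cont: "continuous_on {0..1} f" by (rule periodic_solution_continuous[OF f])
  have g_cont: "continuous_on {0..1} g" by (rule DERIV_continuous_on[OF g_deriv])
  have \<sigma>_sq: "\<sigma> * \<sigma> = 1" "\<bar>\<sigma>\<bar> = 1" using \<sigma> by auto
  obtain h0 where h0: "h0 > 0" and remainder: "\<And>h x. 0 < h \<Longrightarrow> h < h0 \<Longrightarrow> x \<in> {0..1} \<Longrightarrow>
      \<bar>G (f x + \<sigma> * h * g x) - G (f x) - G' (f x) * (\<sigma> * h * g x)\<bar> \<le> h / 4"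
    using small_perturbation_remainder[OF f_cont g_cont \<sigma>_sq(2)] by blast
  have "\<exists>p. periodic_solution (c + h / 2) p \<and>
      \<sigma> * integral {0..1} f < \<sigma> * integral {0..1} p \<and>
      \<sigma> * integral {0..1} p < \<sigma> * integral {0..1} f + h * integral {0..1} g"
    if h: "0 < h" "h < h0" for h
  proof -
    define \<psi> where "\<psi> x = f x + \<sigma> * h * g x" for x
    define \<psi>' where "\<psi>' x = (c - G (f x) - V x) + \<sigma> * h * (\<sigma> - G' (f x) * g x)" for x
    have \<psi>_deriv: "(\<psi> has_real_derivative \<psi>' x) (at x within {0..1})" if "x \<in> {0..1}" for x
      unfolding \<psi>_def[abs_def] \<psi>'_def using f that unfolding periodic_solution_def solution_def
      by (intro DERIV_add DERIV_cmult g_deriv that) auto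
    have strict: "c + h / 2 - G (\<psi> x) - V x < \<psi>' x" if "x \<in> {0..1}" for x
    proof -
      have "\<psi>' x - (c + h / 2 - G (\<psi> x) - V x) =
          h / 2 + (G (f x + \<sigma> * h * g x) - G (f x) - G' (f x) * (\<sigma> * h * g x))"
        unfolding \<psi>'_def \<psi>_def using \<sigma>_sq(1) by (simp add: algebra_simps)
      then show ?thesis using abs_le_D2[OF remainder[OF h that]] h by linarith
    qed
    have \<psi>_periodic: "\<psi> 0 = \<psi> 1" unfolding \<psi>_def using f g_periodic unfolding periodic_solution_def by simp
    have f_\<psi>: "\<sigma> * f x \<le> \<sigma> * \<psi> x" if "x \<in> {0..1}" for x
    proof -
      have "\<sigma> * \<psi> x = \<sigma> * f x + (\<sigma> * \<sigma>) * h * g x" unfolding \<psi>_def by (simp add: algebra_simps)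
      then show ?thesis using \<sigma>_sq(1) g_pos[OF that] h by simp
    qed
    have "c < c + h / 2" using h by simp
    then obtain p where p: "periodic_solution (c + h / 2) p"
      and f_p_\<psi>: "\<And>x. x \<in> {0..1} \<Longrightarrow> \<sigma> * f x < \<sigma> * p x \<and> \<sigma> * p x < \<sigma> * \<psi> x"
      using periodic_solution_between_strict_supersolution[OF f _ \<sigma> \<psi>_deriv strict \<psi>_periodic f_\<psi>] by blast
    have p_cont: "continuous_on {0..1} p" by (rule periodic_solution_continuous[OF p])
    have \<psi>_cont: "continuous_on {0..1} \<psi>" by (rule DERIV_continuous_on[OF \<psi>_deriv])
    have "\<sigma> * integral {0..1} f < \<sigma> * integral {0..1} p"
      by (rule sign_integral_less[OF f_cont p_cont]) (use f_p_\<psi> in blast)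
    moreover have "\<sigma> * integral {0..1} p < \<sigma> * integral {0..1} \<psi>"
      by (rule sign_integral_less[OF p_cont \<psi>_cont]) (use f_p_\<psi> in blast)
    moreover have "integral {0..1} \<psi> = integral {0..1} f + integral {0..1} (\<lambda>x. \<sigma> * h * g x)"
      unfolding \<psi>_def[abs_def] using f_cont g_cont
      by (intro integral_add integrable_continuous_interval continuous_intros)
    then have "\<sigma> * integral {0..1} \<psi> = \<sigma> * integral {0..1} f + h * integral {0..1} g"
      using \<sigma>_sq(1) by (simp add: algebra_simps)
    ultimately show ?thesis using p by auto
  qed
  then show ?thesis using that h0 by blast
qed

lemma Hbar_periodic_solution:
  assumes "\<And>x. V (x + 1) = V x" "continuous_on UNIV V" "periodic_solution k u"
  shows "Hbar G V (integral {0..1} u) = k"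
  using Hbar_fsol_eq(1)[OF cell_sol_periodic_ext[OF assms]] .

lemma Hbar_increment:
  assumes V_periodic: "\<And>x. V (x + 1) = V x" and V_cont_UNIV: "continuous_on UNIV V"
    and coercive: "filterlim G at_top at_top" "filterlim G at_top at_bot"
    and I_nz: "Ifun G G' V \<theta> 1 \<noteq> 0"
    and \<sigma>: "\<sigma> = (if Ifun G G' V \<theta> 1 > 0 then 1 else -1)"
  obtains h0 where "h0 > 0"
    "\<And>h. 0 < h \<Longrightarrow> h < h0 \<Longrightarrow> \<exists>\<theta>s. \<sigma> * \<theta> < \<sigma> * \<theta>s \<and> \<sigma> * \<theta>s < \<sigma> * \<theta> + h * bfun G G' V \<theta> \<and>
       Hbar G V \<theta>s = Hbar G V \<theta> + h / 2"
proof -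
  obtain c u where u: "periodic_solution c u" "integral {0..1} u = \<theta>"
    using periodic_solution_with_mean[OF coercive] by blast
  define f where "f = periodic_ext u"
  have cell: "cell_sol G V \<theta> c f"
    unfolding f_def using cell_sol_periodic_ext[OF V_periodic V_cont_UNIV u(1)] u(2) by simp
  note f = periodic_solution_if_cell_sol[OF cell] and Hbar = Hbar_fsol_eq[OF cell]
  have a_cont: "continuous_on {0..1} (\<lambda>y. G' (f y))"
    by (rule continuous_on_compose2[OF G'_cont periodic_solution_continuous[OF f(1)]]) auto
  have I_eq: "Ifun G G' V \<theta> x = integral {0..x} (\<lambda>y. G' (f y))" for x
    unfolding Ifun_def Hbar(2) ..
  have B_eq: "Bfun G G' V \<theta> x = integral {0..x} (\<lambda>y. exp (Ifun G G' V \<theta> y))" for x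
    unfolding Bfun_def ..
  have g_eq: "gfun G G' V \<theta> x = \<sigma> * (Bfun G G' V \<theta> x + Bfun G G' V \<theta> 1 / (exp (Ifun G G' V \<theta> 1) - 1))
      * exp (- Ifun G G' V \<theta> x)" for x
    unfolding gfun_def \<sigma> Let_def ..
  note g = linear_periodic_solution[OF a_cont I_eq B_eq I_nz \<sigma> g_eq]
  obtain h0 where "h0 > 0" and perturbed: "\<And>h. 0 < h \<Longrightarrow> h < h0 \<Longrightarrow> \<exists>p. periodic_solution (c + h / 2) p \<and>
      \<sigma> * integral {0..1} f < \<sigma> * integral {0..1} p \<and>
      \<sigma> * integral {0..1} p < \<sigma> * integral {0..1} f + h * integral {0..1} (gfun G G' V \<theta>)"
    by (rule perturbed_periodic_solution[OF f(1) g(1,2,3)]) (use \<sigma> in auto)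
  show ?thesis
  proof (rule that[OF \<open>h0 > 0\<close>])
    fix h assume "0 < h" "h < h0"
    then obtain p where "periodic_solution (c + h / 2) p" "\<sigma> * \<theta> < \<sigma> * integral {0..1} p"
      "\<sigma> * integral {0..1} p < \<sigma> * \<theta> + h * bfun G G' V \<theta>"
      using perturbed f(2) unfolding bfun_def by blast
    then show "\<exists>\<theta>s. \<sigma> * \<theta> < \<sigma> * \<theta>s \<and> \<sigma> * \<theta>s < \<sigma> * \<theta> + h * bfun G G' V \<theta> \<and>
       Hbar G V \<theta>s = Hbar G V \<theta> + h / 2"
      using Hbar_periodic_solution[OF V_periodic V_cont_UNIV] Hbar(1) by blast
  qed
qed

end

theorem lemma4p2:
  fixes G G' V :: "real \<Rightarrow> real" and \<theta> :: real
  assumes G_deriv: "\<And>p. (G has_real_derivative G' p) (at p)"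
      and G'_cont: "continuous_on UNIV G'"
      and coercive: "filterlim G at_top at_top" "filterlim G at_top at_bot"
      and V_lip: "\<exists>L. L-lipschitz_on UNIV V"
      and V_per: "\<And>x. V (x + 1) = V x"
      and I_nz: "Ifun G G' V \<theta> 1 \<noteq> 0"
  shows "(Ifun G G' V \<theta> 1 > 0 \<longrightarrow>
            (\<exists>h0>0. \<forall>h. 0 < h \<and> h < h0 \<longrightarrow>
               (\<exists>\<theta>s. \<theta> < \<theta>s \<and> \<theta>s < \<theta> + h * bfun G G' V \<theta> \<and>
                     Hbar G V \<theta>s = Hbar G V \<theta> + h / 2 \<and>
                     Hbar G V \<theta> + h / 2 > Hbar G V \<theta>)))
       \<and> (Ifun G G' V \<theta> 1 < 0 \<longrightarrow>
            (\<exists>h0>0. \<forall>h. 0 < h \<and> h < h0 \<longrightarrow>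
               (\<exists>\<theta>s. \<theta> - h * bfun G G' V \<theta> < \<theta>s \<and> \<theta>s < \<theta> \<and>
                     Hbar G V \<theta>s = Hbar G V \<theta> + h / 2 \<and>
                     Hbar G V \<theta> + h / 2 > Hbar G V \<theta>)))"
proof -
  have V_cont_UNIV: "continuous_on UNIV V" using V_lip lipschitz_on_continuous_on by blast
  interpret cell_ode G G' V
    using G_deriv G'_cont continuous_on_subset[OF V_cont_UNIV] by unfold_locales auto
  define \<sigma> :: real where "\<sigma> = (if Ifun G G' V \<theta> 1 > 0 then 1 else -1)"
  obtain h0 where h0: "h0 > 0"
    and step: "\<And>h. 0 < h \<Longrightarrow> h < h0 \<Longrightarrow> \<exists>\<theta>s. \<sigma> * \<theta> < \<sigma> * \<theta>s \<and>
      \<sigma> * \<theta>s < \<sigma> * \<theta> + h * bfun G G' V \<theta> \<and> Hbar G V \<theta>s = Hbar G V \<theta> + h / 2"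
    using Hbar_increment[OF V_per V_cont_UNIV coercive I_nz \<sigma>_def] by blast
  show ?thesis
  proof (intro conjI impI)
    assume "Ifun G G' V \<theta> 1 > 0"
    then have "\<forall>h. 0 < h \<and> h < h0 \<longrightarrow> (\<exists>\<theta>s. \<theta> < \<theta>s \<and> \<theta>s < \<theta> + h * bfun G G' V \<theta> \<and>
        Hbar G V \<theta>s = Hbar G V \<theta> + h / 2 \<and> Hbar G V \<theta> + h / 2 > Hbar G V \<theta>)"
      using step unfolding \<sigma>_def by auto
    then show "\<exists>h0>0. \<forall>h. 0 < h \<and> h < h0 \<longrightarrow> (\<exists>\<theta>s. \<theta> < \<theta>s \<and> \<theta>s < \<theta> + h * bfun G G' V \<theta> \<and>
        Hbar G V \<theta>s = Hbar G V \<theta> + h / 2 \<and> Hbar G V \<theta> + h / 2 > Hbar G V \<theta>)"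
      using h0 by blast
  next
    assume "Ifun G G' V \<theta> 1 < 0"
    then have "\<forall>h. 0 < h \<and> h < h0 \<longrightarrow> (\<exists>\<theta>s. \<theta> - h * bfun G G' V \<theta> < \<theta>s \<and> \<theta>s < \<theta> \<and>
        Hbar G V \<theta>s = Hbar G V \<theta> + h / 2 \<and> Hbar G V \<theta> + h / 2 > Hbar G V \<theta>)"
      using step unfolding \<sigma>_def by (auto simp: algebra_simps)
    then show "\<exists>h0>0. \<forall>h. 0 < h \<and> h < h0 \<longrightarrow> (\<exists>\<theta>s. \<theta> - h * bfun G G' V \<theta> < \<theta>s \<and> \<theta>s < \<theta> \<and>
        Hbar G V \<theta>s = Hbar G V \<theta> + h / 2 \<and> Hbar G V \<theta> + h / 2 > Hbar G V \<theta>)"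
      using h0 by blast
  qed
qed

end
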